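(* Let $\Gamma$ be a bicombable, one-ended finitely generated group which is semistable at $\infty$. Then $\mathrm{c\text{-}cat}(\Gamma)\le\mathrm{asdim}(\Gamma)$.
   Context: Notation: $\mathbb{R}_+=[0,\infty)$, $\mathbb{N}=\{0,1,\dots\}$. $\Gamma$ carries a word metric. A (not necessarily continuous) map is controlled if for every $r>0$ there is $S>0$ with $d(x,x')<r\Rightarrow d(f(x),f(x'))<S$; proper if preimages of bounded sets are bounded; coarse if both. A bicombing on a metric space $X$ is a controlled map $C:X\times X\times\mathbb{N}\to X$, $C_p(x,n)=C(p,x,n)$, with $C_p(x,0)=C_p(p,n)=p$ and such that for each $p$ and bounded $K$ there is $N$ with $C_p(x,n)=x$ for $n\ge N$, $x\in K$. $\Gamma$ is semistable at $\infty$ if any two geodesic rays (in its Cayley 2-complex) converging to the same Freudenthal end are properly homotopic (via a continuous proper homotopy); one-ended means exactly one Freudenthal end. For a coarse $q:A\to\mathbb{R}_+$, $I_qA=\{(x,t)\in A\times\mathbb{R}_+: t\le q(x)\}$ (product sup metric), $i_0(x)=(x,0)$, $i_1(x)=(x,q(x))$; coarse maps $f,g:A\to X$ are coarsely homotopic if there exist a coarse $q$ and a coarse $H:I_qA\to X$ with $H\circ i_0=f$, $H\circ i_1=g$. $A\subseteq X$ is coarsely categorical if there are coarse maps $\alpha:\mathbb{R}_+\to X$, $j:A\to\mathbb{R}_+$ with $\alpha\circ j$ coarsely homotopic to the inclusion; $\mathrm{c\text{-}cat}(X)$ is the least $k$ such that $X$ is covered by $k+1$ coarsely categorical sets; $\mathrm{c\text{-}cat}(\Gamma)$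 is $\mathrm{c\text{-}cat}$ of $\Gamma$ with its word metric (equivalently of any proper geodesic space with a proper cocompact isometric $\Gamma$-action). $\mathrm{asdim}(X)\le n$ means: for every $r<\infty$ there exist $r$-disjoint families $\mathcal{U}^0,\dots,\mathcal{U}^n$ of uniformly bounded subsets covering $X$. *)

theory Defs
  imports "HOL-Analysis.Analysis" "HOL-Algebra.Algebra" "HOL-Library.Extended_Nat"
begin

definition controlled :: "'a set \<Rightarrow> ('a \<Rightarrow> 'a \<Rightarrow> real) \<Rightarrow> ('b \<Rightarrow> 'b \<Rightarrow> real) \<Rightarrow> ('a \<Rightarrow> 'b) \<Rightarrow> bool"
  where "controlled A dA dB f \<longleftrightarrow>
    (\<forall>r>0. \<exists>S>0. \<forall>x\<in>A. \<forall>x'\<in>A. dA x x' < r \<longrightarrow> dB (f x) (f x') < S)"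

definition bounded_in :: "('a \<Rightarrow> 'a \<Rightarrow> real) \<Rightarrow> 'a set \<Rightarrow> bool"
  where "bounded_in d K \<longleftrightarrow> (\<exists>c. \<forall>x\<in>K. \<forall>y\<in>K. d x y \<le> c)"

definition metric_proper :: "'a set \<Rightarrow> ('a \<Rightarrow> 'a \<Rightarrow> real) \<Rightarrow> 'b set \<Rightarrow> ('b \<Rightarrow> 'b \<Rightarrow> real) \<Rightarrow> ('a \<Rightarrow> 'b) \<Rightarrow> bool"
  where "metric_proper A dA B dB f \<longleftrightarrow>
    (\<forall>K. K \<subseteq> B \<longrightarrow> bounded_in dB K \<longrightarrow> bounded_in dA {x\<in>A. f x \<in> K})"

definition coarse_map :: "'a set \<Rightarrow> ('a \<Rightarrow> 'a \<Rightarrow> real) \<Rightarrow> 'b set \<Rightarrow> ('b \<Rightarrow> 'b \<Rightarrow> real) \<Rightarrow> ('a \<Rightarrow> 'b) \<Rightarrow> bool"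
  where "coarse_map A dA B dB f \<longleftrightarrow>
    f ` A \<subseteq> B \<and> controlled A dA dB f \<and> metric_proper A dA B dB f"

definition real_dist :: "real \<Rightarrow> real \<Rightarrow> real" where "real_dist x y = \<bar>x - y\<bar>"

definition nat_dist :: "nat \<Rightarrow> nat \<Rightarrow> real" where "nat_dist m n = \<bar>real m - real n\<bar>"

definition prod_dist :: "('a \<Rightarrow> 'a \<Rightarrow> real) \<Rightarrow> ('b \<Rightarrow> 'b \<Rightarrow> real) \<Rightarrow> 'a \<times> 'b \<Rightarrow> 'a \<times> 'b \<Rightarrow> real"
  where "prod_dist dA dB p p' = max (dA (fst p) (fst p')) (dB (snd p) (snd p'))"

definition cyl :: "('a \<Rightarrow> real) \<Rightarrow> 'a set \<Rightarrow> ('a \<times> real) set"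
  where "cyl q A = {(x, t). x \<in> A \<and> 0 \<le> t \<and> t \<le> q x}"

definition coarsely_homotopic ::
  "'a set \<Rightarrow> ('a \<Rightarrow> 'a \<Rightarrow> real) \<Rightarrow> 'b set \<Rightarrow> ('b \<Rightarrow> 'b \<Rightarrow> real) \<Rightarrow> ('a \<Rightarrow> 'b) \<Rightarrow> ('a \<Rightarrow> 'b) \<Rightarrow> bool"
  where "coarsely_homotopic A dA M dX f g \<longleftrightarrow>
    (\<exists>q. coarse_map A dA {0..} real_dist q \<and>
      (\<exists>H. coarse_map (cyl q A) (prod_dist dA real_dist) M dX H \<and>
           (\<forall>x\<in>A. H (x, 0) = f x \<and> H (x, q x) = g x)))"

definition coarsely_categorical :: "'a set \<Rightarrow> ('a \<Rightarrow> 'a \<Rightarrow> real) \<Rightarrow> 'a set \<Rightarrow> bool"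
  where "coarsely_categorical M d A \<longleftrightarrow>
    (\<exists>\<alpha> j. coarse_map {0..} real_dist M d \<alpha> \<and> coarse_map A d {0..} real_dist j \<and>
       coarsely_homotopic A d M d (\<alpha> \<circ> j) id)"

definition ccat_le :: "'a set \<Rightarrow> ('a \<Rightarrow> 'a \<Rightarrow> real) \<Rightarrow> nat \<Rightarrow> bool"
  where "ccat_le M d k \<longleftrightarrow>
    (\<exists>U :: nat \<Rightarrow> 'a set. (\<forall>i\<le>k. U i \<subseteq> M \<and> coarsely_categorical M d (U i)) \<and>
       M \<subseteq> (\<Union>i\<le>k. U i))"

text \<open>Coarse LS category (least such k; \<infinity> if none).\<close>
definition ccat :: "'a set \<Rightarrow> ('a \<Rightarrow> 'a \<Rightarrow> real) \<Rightarrow> enat"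
  where "ccat M d = (INF k\<in>{k. ccat_le M d k}. enat k)"

definition asdim_le :: "'a set \<Rightarrow> ('a \<Rightarrow> 'a \<Rightarrow> real) \<Rightarrow> nat \<Rightarrow> bool"
  where "asdim_le M d n \<longleftrightarrow>
    (\<forall>r::real. \<exists>\<U> :: nat \<Rightarrow> 'a set set.
       (\<forall>i\<le>n. (\<forall>U\<in>\<U> i. U \<subseteq> M) \<and>
              (\<exists>D. \<forall>U\<in>\<U> i. \<forall>x\<in>U. \<forall>y\<in>U. d x y \<le> D) \<and>
              (\<forall>U\<in>\<U> i. \<forall>V\<in>\<U> i. U \<noteq> V \<longrightarrow> (\<forall>x\<in>U. \<forall>y\<in>V. r < d x y))) \<and>
       M \<subseteq> \<Union>(\<Union>i\<le>n. \<U> i))"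

text \<open>Asymptotic dimension (least such n; \<infinity> if none).\<close>
definition asdim :: "'a set \<Rightarrow> ('a \<Rightarrow> 'a \<Rightarrow> real) \<Rightarrow> enat"
  where "asdim M d = (INF n\<in>{n. asdim_le M d n}. enat n)"

definition bicombing :: "'a set \<Rightarrow> ('a \<Rightarrow> 'a \<Rightarrow> real) \<Rightarrow> ('a \<Rightarrow> 'a \<Rightarrow> nat \<Rightarrow> 'a) \<Rightarrow> bool"
  where "bicombing M d C \<longleftrightarrow>
    (\<forall>p\<in>M. \<forall>x\<in>M. \<forall>n. C p x n \<in> M) \<and>
    controlled (M \<times> M \<times> UNIV) (prod_dist d (prod_dist d nat_dist)) d
       (\<lambda>(p, x, n). C p x n) \<and>
    (\<forall>p\<in>M. \<forall>x\<in>M. C p x 0 = p) \<and>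
    (\<forall>p\<in>M. \<forall>n. C p p n = p) \<and>
    (\<forall>p\<in>M. \<forall>K. K \<subseteq> M \<longrightarrow> bounded_in d K \<longrightarrow> (\<exists>N. \<forall>x\<in>K. \<forall>n\<ge>N. C p x n = x))"

text \<open>Words: lists of letters (s, True) = s and (s, False) = s inverse.\<close>
definition word_eval :: "('g, 'b) monoid_scheme \<Rightarrow> ('g \<times> bool) list \<Rightarrow> 'g"
  where "word_eval G w =
    foldr (\<lambda>(s, b) acc. (if b then s else inv\<^bsub>G\<^esub> s) \<otimes>\<^bsub>G\<^esub> acc) w \<one>\<^bsub>G\<^esub>"

definition word_dist :: "('g, 'b) monoid_scheme \<Rightarrow> 'g set \<Rightarrow> 'g \<Rightarrow> 'g \<Rightarrow> real"
  where "word_dist G S g h =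
    real (LEAST n. \<exists>w. length w = n \<and> set (map fst w) \<subseteq> S \<and> g \<otimes>\<^bsub>G\<^esub> word_eval G w = h)"

definition bicombable :: "('g, 'b) monoid_scheme \<Rightarrow> 'g set \<Rightarrow> bool"
  where "bicombable G S \<longleftrightarrow> (\<exists>C. bicombing (carrier G) (word_dist G S) C)"

text \<open>Connectivity in the Cayley graph with the vertex set K removed.\<close>
definition conn_avoid :: "('g, 'b) monoid_scheme \<Rightarrow> 'g set \<Rightarrow> 'g set \<Rightarrow> 'g \<Rightarrow> 'g \<Rightarrow> bool"
  where "conn_avoid G S K x y \<longleftrightarrow>
    (x, y) \<in> {(a, b). a \<in> carrier G - K \<and> b \<in> carrier G - K \<and> word_dist G S a b = 1}\<^sup>*"

text \<open>Exactly one (Freudenthal) end of the Cayley graph.\<close>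
definition one_ended :: "('g, 'b) monoid_scheme \<Rightarrow> 'g set \<Rightarrow> bool"
  where "one_ended G S \<longleftrightarrow>
    (\<forall>K. finite K \<longrightarrow>
      (\<exists>x\<in>carrier G - K. infinite {y. conn_avoid G S K x y} \<and>
         (\<forall>y\<in>carrier G - K. infinite {z. conn_avoid G S K y z} \<longrightarrow> conn_avoid G S K x y)))"

text \<open>Two vertex sequences converge to the same Freudenthal end.\<close>
definition same_end :: "('g, 'b) monoid_scheme \<Rightarrow> 'g set \<Rightarrow> (nat \<Rightarrow> 'g) \<Rightarrow> (nat \<Rightarrow> 'g) \<Rightarrow> bool"
  where "same_end G S v1 v2 \<longleftrightarrow>
    (\<forall>K. finite K \<longrightarrow> (\<exists>N. \<forall>m\<ge>N. \<forall>n\<ge>N.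
        v1 m \<notin> K \<and> v2 n \<notin> K \<and> conn_avoid G S K (v1 m) (v2 n)))"

definition pres_step :: "'g set \<Rightarrow> ('g \<times> bool) list list \<Rightarrow> (('g \<times> bool) list \<times> ('g \<times> bool) list) set"
  where "pres_step S R = {(x @ y @ z, x @ z) | x y z.
      (\<exists>s b. s \<in> S \<and> y = [(s, b), (s, \<not> b)]) \<or> y \<in> set R}"

definition presentation :: "('g, 'b) monoid_scheme \<Rightarrow> 'g set \<Rightarrow> ('g \<times> bool) list list \<Rightarrow> bool"
  where "presentation G S R \<longleftrightarrow>
    (\<forall>w\<in>set R. w \<noteq> [] \<and> set (map fst w) \<subseteq> S \<and> word_eval G w = \<one>\<^bsub>G\<^esub>) \<and>
    (\<forall>w. set (map fst w) \<subseteq> S \<longrightarrow> word_eval G w = \<one>\<^bsub>G\<^esub> \<longrightarrow>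
         (w, []) \<in> (pres_step S R \<union> (pres_step S R)\<inverse>)\<^sup>*)"

type_synonym 'g rawpt = "('g \<times> 'g \<times> nat) \<times> (real \<times> real)"

text \<open>Raw cells: edge (g,s) is ((g,s,0),(t,0)), t in [0,1], from g to g s;
  2-cell of relator i at g is ((g,g,i+1), z), z in the closed unit disk.\<close>
definition cay_raw :: "('g, 'b) monoid_scheme \<Rightarrow> 'g set \<Rightarrow> ('g \<times> bool) list list \<Rightarrow> 'g rawpt set"
  where "cay_raw G S R =
    {((g, s, 0), (t, 0)) | g s t. g \<in> carrier G \<and> s \<in> S \<and> 0 \<le> t \<and> t \<le> 1} \<union>
    {((g, g, Suc i), z) | g i z. g \<in> carrier G \<and> i < length R \<and> norm z \<le> 1}"

definition circ :: "real \<Rightarrow> real \<times> real" where "circ u = (cos (2 * pi * u), sin (2 * pi * u))"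

definition letter_pt :: "('g, 'b) monoid_scheme \<Rightarrow> 'g \<Rightarrow> 'g \<times> bool \<Rightarrow> real \<Rightarrow> 'g rawpt"
  where "letter_pt G h l \<tau> = (if snd l then ((h, fst l, 0), (\<tau>, 0))
      else ((h \<otimes>\<^bsub>G\<^esub> inv\<^bsub>G\<^esub> (fst l), fst l, 0), (1 - \<tau>, 0)))"

definition cay_glue :: "('g, 'b) monoid_scheme \<Rightarrow> 'g set \<Rightarrow> ('g \<times> bool) list list \<Rightarrow> ('g rawpt \<times> 'g rawpt) set"
  where "cay_glue G S R = {(x, y).
     (\<exists>g s s'. g \<in> carrier G \<and> s \<in> S \<and> s' \<in> S \<and>
        x = ((g, s, 0), (0, 0)) \<and> y = ((g, s', 0), (0, 0))) \<or>
     (\<exists>g s s'. g \<in> carrier G \<and> s \<in> S \<and> s' \<in> S \<and>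
        x = ((g, s, 0), (1, 0)) \<and> y = ((g \<otimes>\<^bsub>G\<^esub> s, s', 0), (0, 0))) \<or>
     (\<exists>g i k \<tau>. g \<in> carrier G \<and> i < length R \<and> k < length (R ! i) \<and> 0 \<le> \<tau> \<and> \<tau> \<le> 1 \<and>
        x = ((g, g, Suc i), circ ((real k + \<tau>) / real (length (R ! i)))) \<and>
        y = letter_pt G (g \<otimes>\<^bsub>G\<^esub> word_eval G (take k (R ! i))) ((R ! i) ! k) \<tau>)}"

definition cay_proj :: "('g, 'b) monoid_scheme \<Rightarrow> 'g set \<Rightarrow> ('g \<times> bool) list list \<Rightarrow> 'g rawpt \<Rightarrow> 'g rawpt set"
  where "cay_proj G S R x = ((cay_glue G S R \<union> (cay_glue G S R)\<inverse>)\<^sup>*) `` {x}"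

definition cay_raw_top :: "('g, 'b) monoid_scheme \<Rightarrow> 'g set \<Rightarrow> ('g \<times> bool) list list \<Rightarrow> 'g rawpt topology"
  where "cay_raw_top G S R =
    subtopology (prod_topology (discrete_topology UNIV) euclidean) (cay_raw G S R)"

text \<open>The Cayley 2-complex, with the quotient topology.\<close>
definition cayley_complex :: "('g, 'b) monoid_scheme \<Rightarrow> 'g set \<Rightarrow> ('g \<times> bool) list list \<Rightarrow> 'g rawpt set topology"
  where "cayley_complex G S R = topology_generated_by
    {U. U \<subseteq> cay_proj G S R ` cay_raw G S R \<and>
        openin (cay_raw_top G S R) {x \<in> cay_raw G S R. cay_proj G S R x \<in> U}}"

text \<open>Geodesic edge ray (unit speed) through the vertex sequence v.\<close>
definition geodesic_ray :: "('g, 'b) monoid_scheme \<Rightarrow> 'g set \<Rightarrow> ('g \<times> bool) list list \<Rightarrow>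
    (nat \<Rightarrow> 'g) \<Rightarrow> (real \<Rightarrow> 'g rawpt set) \<Rightarrow> bool"
  where "geodesic_ray G S R v r \<longleftrightarrow>
    (\<forall>n. v n \<in> carrier G) \<and>
    (\<forall>m n. word_dist G S (v m) (v n) = \<bar>real m - real n\<bar>) \<and>
    (\<forall>n. \<exists>s\<in>S.
       (v (Suc n) = v n \<otimes>\<^bsub>G\<^esub> s \<and>
          (\<forall>\<tau>\<in>{0..1}. r (real n + \<tau>) = cay_proj G S R ((v n, s, 0), (\<tau>, 0)))) \<or>
       (v n = v (Suc n) \<otimes>\<^bsub>G\<^esub> s \<and>
          (\<forall>\<tau>\<in>{0..1}. r (real n + \<tau>) = cay_proj G S R ((v (Suc n), s, 0), (1 - \<tau>, 0)))))"

definition proper_cmap :: "'a topology \<Rightarrow> 'b topology \<Rightarrow> ('a \<Rightarrow> 'b) \<Rightarrow> bool"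
  where "proper_cmap M Y f \<longleftrightarrow> continuous_map M Y f \<and>
    (\<forall>K. compactin Y K \<longrightarrow> compactin M {x \<in> topspace M. f x \<in> K})"

definition properly_homotopic_rays :: "'b topology \<Rightarrow> (real \<Rightarrow> 'b) \<Rightarrow> (real \<Rightarrow> 'b) \<Rightarrow> bool"
  where "properly_homotopic_rays M r1 r2 \<longleftrightarrow>
    (\<exists>H. proper_cmap (prod_topology (top_of_set {0::real..}) (top_of_set {0::real..1})) M H \<and>
       (\<forall>t\<ge>0. H (t, 0) = r1 t \<and> H (t, 1) = r2 t))"

definition semistable_at_infinity :: "('g, 'b) monoid_scheme \<Rightarrow> 'g set \<Rightarrow> bool"
  where "semistable_at_infinity G S \<longleftrightarrow>
    (\<exists>R. presentation G S R \<and>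
      (\<forall>v1 r1 v2 r2. geodesic_ray G S R v1 r1 \<and> geodesic_ray G S R v2 r2 \<and> same_end G S v1 v2
         \<longrightarrow> properly_homotopic_rays (cayley_complex G S R) r1 r2))"

end

theory Submission
  imports Defs
begin

text \<open>
  One-endedness yields a proper 1-Lipschitz
  ray and, for every point \<open>c\<close>, a walk from the ray to \<open>c\<close> that stays far from the identity when
  \<open>c\<close> is far. Hence a set \<open>A\<close> is coarsely categorical as soon as its points \<open>x\<close> have centers
  \<open>c x\<close> such that only finitely many combing lines \<open>C (c x) x\<close> meet a given ball and, at every
  scale \<open>r\<close>, only finitely many points have an \<open>r\<close>-neighbor in \<open>A\<close> with a different center:
  the homotopy starts at the ray point where the walk to \<open>c x\<close> begins, follows that walk, and then
  the combing line from \<open>c x\<close> to \<open>x\<close>.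

  Such centers exist on each of \<open>n + 1\<close> color classes. Cut \<open>\<Gamma>\<close> into annuli of rapidly growing
  width and use on the \<open>k\<close>-th annulus a cover of scale \<open>r k\<close>, where \<open>r (k + 1)\<close> exceeds
  \<open>2 r k\<close> plus the diameter bound at scale \<open>r k\<close>. Then a piece of the \<open>k\<close>-th cover is
  \<open>r k\<close>-close to at most one piece of the same color in the next annulus, and centering both
  at a point of the outer piece makes the center map locally constant far out.
\<close>

definition interval_index :: "(nat \<Rightarrow> nat) \<Rightarrow> nat \<Rightarrow> nat" where
  "interval_index f n = (LEAST k. n < f (Suc k))"

context
  fixes f :: "nat \<Rightarrow> nat"
  assumes mono_f: "strict_mono f" and f_0: "f 0 = 0"
begin

lemma interval_index_upper: "n < f (Suc (interval_index f n))"
proof -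
  have "n < f (Suc n)" using strict_mono_imp_increasing[OF mono_f, of "Suc n"] by simp
  then show ?thesis unfolding interval_index_def by (rule LeastI)
qed

lemma interval_index_lower: "f (interval_index f n) \<le> n"
proof (cases "interval_index f n")
  case (Suc j)
  then have "\<not> n < f (Suc j)" unfolding interval_index_def by (metis lessI not_less_Least)
  then show ?thesis using Suc by simp
qed (simp add: f_0)

lemma interval_index_ge: "f k \<le> n \<Longrightarrow> k \<le> interval_index f n"
  using interval_index_upper[of n] strict_mono_less[OF mono_f, of k "Suc (interval_index f n)"]
  by linarith

lemma interval_index_less: "n < f k \<Longrightarrow> interval_index f n < k"
  using interval_index_lower[of n] strict_mono_less_eq[OF mono_f, of k "interval_index f n"]
  by linarith

lemma interval_index_eq: "f k \<le> n \<Longrightarrow> n < f (Suc k) \<Longrightarrow> interval_index f n = k"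
  using interval_index_ge[of k n] interval_index_less[of n "Suc k"] by simp

end

lemma strict_mono_partial_sums:
  fixes w :: "nat \<Rightarrow> nat"
  assumes "\<And>j. 0 < w j" shows "strict_mono (\<lambda>k. \<Sum>j<k. w j)"
  using assms by (simp add: strict_mono_Suc_iff)

lemma finite_bounded_in: "finite K \<Longrightarrow> bounded_in d K"
proof -
  assume "finite K"
  then have "bdd_above (case_prod d ` (K \<times> K))" by (simp add: bdd_above_finite)
  then show ?thesis unfolding bounded_in_def bdd_above_def by fastforce
qed

lemma bounded_in_real_dist_imp_bdd_above:
  assumes "bounded_in real_dist K" shows "\<exists>b. \<forall>k\<in>K. k \<le> b"
proof (cases "K = {}")
  case False
  then obtain k0 where k0: "k0 \<in> K" by blast
  obtain c where "\<forall>x\<in>K. \<forall>y\<in>K. real_dist x y \<le> c" using assms unfolding bounded_in_def by blast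
  then show ?thesis using k0 by (intro exI[of _ "k0 + c"]) (force simp: real_dist_def)
qed simp

lemma nat_floor_le_add_ceiling:
  fixes t s r :: real
  assumes "0 \<le> t" "0 \<le> s" "\<bar>t - s\<bar> < r"
  shows "nat \<lfloor>t\<rfloor> \<le> nat \<lfloor>s\<rfloor> + nat \<lceil>r\<rceil>"
proof -
  have "real_of_int \<lfloor>t\<rfloor> \<le> t" "s < real_of_int \<lfloor>s\<rfloor> + 1" "r \<le> real_of_int \<lceil>r\<rceil>"
    by linarith+
  then have "\<lfloor>t\<rfloor> < \<lfloor>s\<rfloor> + 1 + \<lceil>r\<rceil>" using assms by linarith
  then show ?thesis using assms by linarith
qed

locale word_group = group G for G :: "('g, 'b) monoid_scheme" (structure) +
  fixes S :: "'g set"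
  assumes finite_gens: "finite S" and gens_carrier: "S \<subseteq> carrier G"
    and generate_gens: "generate G S = carrier G"
begin

definition is_word :: "('g \<times> bool) list \<Rightarrow> bool" where "is_word w \<longleftrightarrow> set (map fst w) \<subseteq> S"

abbreviation ev where "ev w \<equiv> word_eval G w"

lemma ev_Nil[simp]: "ev [] = \<one>"
  by (simp add: word_eval_def)

lemma ev_Cons: "ev ((s, b) # w) = (if b then s else inv s) \<otimes> ev w"
  by (simp add: word_eval_def)

lemma is_word_Nil[simp]: "is_word []"
  by (simp add: is_word_def)

lemma is_word_Cons[simp]: "is_word (l # w) \<longleftrightarrow> fst l \<in> S \<and> is_word w"
  by (auto simp: is_word_def)

lemma is_word_append[simp]: "is_word (w1 @ w2) \<longleftrightarrow> is_word w1 \<and> is_word w2"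
  by (auto simp: is_word_def)

lemma is_word_take: "is_word w \<Longrightarrow> is_word (take i w)"
  unfolding is_word_def by (metis dual_order.trans set_take_subset take_map)

lemma ev_in_carrier: "is_word w \<Longrightarrow> ev w \<in> carrier G"
proof (induction w)
  case Nil then show ?case by simp
next
  case (Cons l w) then show ?case using gens_carrier by (cases l) (auto simp: ev_Cons)
qed

lemma ev_append: "is_word w1 \<Longrightarrow> is_word w2 \<Longrightarrow> ev (w1 @ w2) = ev w1 \<otimes> ev w2"
proof (induction w1)
  case Nil then show ?case using ev_in_carrier by simp
next
  case (Cons l w)
  obtain s b where l: "l = (s, b)" by (cases l)
  have s: "s \<in> carrier G" using Cons.prems l gens_carrier by auto
  show ?case using Cons ev_in_carrier s by (auto simp: l ev_Cons m_assoc)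
qed

definition word_inv :: "('g \<times> bool) list \<Rightarrow> ('g \<times> bool) list" where
  "word_inv w = rev (map (\<lambda>(s, b). (s, \<not> b)) w)"

lemma is_word_word_inv[simp]: "is_word (word_inv w) \<longleftrightarrow> is_word w"
proof -
  have "set (map fst (word_inv w)) = set (map fst w)" by (induct w) (auto simp: word_inv_def)
  then show ?thesis by (simp add: is_word_def)
qed

lemma ev_word_inv: "is_word w \<Longrightarrow> ev (word_inv w) = inv (ev w)"
proof (induction w)
  case Nil then show ?case by (simp add: word_inv_def)
next
  case (Cons l w)
  obtain s b where l: "l = (s, b)" by (cases l)
  have sS: "s \<in> S" and s: "s \<in> carrier G" using Cons.prems l gens_carrier by auto
  have "word_inv (l # w) = word_inv w @ [(s, \<not> b)]" by (simp add: word_inv_def l)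
  then have "ev (word_inv (l # w)) = inv (ev w) \<otimes> (if b then inv s else s)"
    using Cons s sS ev_append[of "word_inv w" "[(s, \<not> b)]"] by (cases b) (simp_all add: ev_Cons)
  also have "\<dots> = inv ((if b then s else inv s) \<otimes> ev w)"
    using s ev_in_carrier[of w] Cons.prems by (cases b) (simp_all add: inv_mult_group)
  finally show ?case by (simp add: l ev_Cons)
qed

lemma ev_surj: "g \<in> carrier G \<Longrightarrow> \<exists>w. is_word w \<and> ev w = g"
proof -
  assume "g \<in> carrier G"
  then have "g \<in> generate G S" using generate_gens by simp
  then show ?thesis
  proof (induction rule: generate.induct)
    case one then show ?case by (intro exI[of _ "[]"]) simp
  next
    case (incl h) then show ?case using gens_carrier
      by (intro exI[of _ "[(h, True)]"]) (auto simp: ev_Cons)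
  next
    case (inv h) then show ?case using gens_carrier
      by (intro exI[of _ "[(h, False)]"]) (auto simp: ev_Cons)
  next
    case (eng h1 h2)
    then obtain w1 w2 where "is_word w1" "ev w1 = h1" "is_word w2" "ev w2 = h2" by blast
    then show ?case by (intro exI[of _ "w1 @ w2"]) (simp add: ev_append)
  qed
qed

definition wdist :: "'g \<Rightarrow> 'g \<Rightarrow> nat" where
  "wdist x y = (LEAST n. \<exists>w. length w = n \<and> set (map fst w) \<subseteq> S \<and> x \<otimes> ev w = y)"

lemma word_dist_eq_wdist: "word_dist G S x y = real (wdist x y)"
  by (simp add: word_dist_def wdist_def)

lemma wdist_le_length: "is_word w \<Longrightarrow> x \<otimes> ev w = y \<Longrightarrow> wdist x y \<le> length w"
  unfolding wdist_def by (rule Least_le) (auto simp: is_word_def)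

lemma geodesic_word_exists:
  assumes "x \<in> carrier G" "y \<in> carrier G"
  shows "\<exists>w. is_word w \<and> length w = wdist x y \<and> x \<otimes> ev w = y"
proof -
  have "inv x \<otimes> y \<in> carrier G" using assms by simp
  then obtain w where w: "is_word w" "ev w = inv x \<otimes> y" using ev_surj by blast
  then have "x \<otimes> ev w = y" using assms by (simp add: m_assoc[symmetric])
  then have "\<exists>n w. length w = n \<and> set (map fst w) \<subseteq> S \<and> x \<otimes> ev w = y"
    using w(1) unfolding is_word_def by blast
  then have "\<exists>w. length w = wdist x y \<and> set (map fst w) \<subseteq> S \<and> x \<otimes> ev w = y"
    unfolding wdist_def by (rule LeastI_ex)
  then show ?thesis unfolding is_word_def by blast
qed

lemma wdist_self[simp]: "x \<in> carrier G \<Longrightarrow> wdist x x = 0"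
  using wdist_le_length[of "[]" x x] by simp

lemma wdist_sym: assumes "x \<in> carrier G" "y \<in> carrier G" shows "wdist x y = wdist y x"
proof -
  have *: "wdist b a \<le> wdist a b" if ab: "a \<in> carrier G" "b \<in> carrier G" for a b
  proof -
    obtain w where w: "is_word w" "length w = wdist a b" "a \<otimes> ev w = b"
      using geodesic_word_exists[OF ab] by blast
    have "b \<otimes> ev (word_inv w) = (a \<otimes> ev w) \<otimes> inv (ev w)" using w(3) ev_word_inv[OF w(1)] by simp
    also have "\<dots> = a" using ab ev_in_carrier[OF w(1)] by (simp add: m_assoc)
    finally have "b \<otimes> ev (word_inv w) = a" .
    then have "wdist b a \<le> length (word_inv w)" using w(1) by (intro wdist_le_length) simp_all
    then show ?thesis using w(2) by (simp add: word_inv_def)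
  qed
  show ?thesis using *[OF assms] *[OF assms(2,1)] by simp
qed

lemma wdist_triangle:
  assumes "x \<in> carrier G" "y \<in> carrier G" "z \<in> carrier G"
  shows "wdist x z \<le> wdist x y + wdist y z"
proof -
  obtain w1 where w1: "is_word w1" "length w1 = wdist x y" "x \<otimes> ev w1 = y"
    using geodesic_word_exists assms by blast
  obtain w2 where w2: "is_word w2" "length w2 = wdist y z" "y \<otimes> ev w2 = z"
    using geodesic_word_exists assms by blast
  have "x \<otimes> ev (w1 @ w2) = z"
    using w1 w2 ev_append ev_in_carrier assms(1) by (auto simp flip: m_assoc)
  then show ?thesis using wdist_le_length[of "w1 @ w2" x z] w1 w2 by simp
qed

lemma wdist_triangle3:
  "\<lbrakk>a \<in> carrier G; b \<in> carrier G; c \<in> carrier G; d \<in> carrier G\<rbrakk> \<Longrightarrow>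
    wdist a d \<le> wdist a b + wdist b c + wdist c d"
  using wdist_triangle[of a b d] wdist_triangle[of b c d] by simp

lemma wdist_eq_0_imp_eq: "\<lbrakk>x \<in> carrier G; y \<in> carrier G; wdist x y = 0\<rbrakk> \<Longrightarrow> x = y"
  using geodesic_word_exists by fastforce

lemma wdist_letter_le_1:
  assumes "x \<in> carrier G" "s \<in> S"
  shows "wdist x (x \<otimes> (if b then s else inv s)) \<le> 1"
  using wdist_le_length[of "[(s, b)]" x] assms gens_carrier by (auto simp: ev_Cons)

lemma finite_wdist_ball: assumes x: "x \<in> carrier G" shows "finite {y \<in> carrier G. wdist x y \<le> m}"
proof -
  have "{y \<in> carrier G. wdist x y \<le> m} \<subseteq> (\<lambda>w. x \<otimes> ev w) ` {w. set w \<subseteq> S \<times> UNIV \<and> length w \<le> m}"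
  proof
    fix y assume y: "y \<in> {y \<in> carrier G. wdist x y \<le> m}"
    obtain w where w: "is_word w" "length w = wdist x y" "x \<otimes> ev w = y"
      using geodesic_word_exists x y by blast
    then have "set w \<subseteq> S \<times> UNIV" "length w \<le> m" using y unfolding is_word_def by auto
    then show "y \<in> (\<lambda>w. x \<otimes> ev w) ` {w. set w \<subseteq> S \<times> UNIV \<and> length w \<le> m}"
      using w(3) by blast
  qed
  moreover have "finite {w :: ('g \<times> bool) list. set w \<subseteq> S \<times> UNIV \<and> length w \<le> m}"
    by (rule finite_lists_length_le) (simp add: finite_gens)
  ultimately show ?thesis by (meson finite_imageI finite_subset)
qed

abbreviation wlen :: "'g \<Rightarrow> nat" where "wlen x \<equiv> wdist \<one> x"

definition wball :: "nat \<Rightarrow> 'g set" where "wball m = {z \<in> carrier G. wlen z \<le> m}"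

lemma finite_wball: "finite (wball m)"
  unfolding wball_def by (rule finite_wdist_ball) simp

lemma one_in_wball: "\<one> \<in> wball m"
  by (simp add: wball_def)

lemma wlen_triangle: "x \<in> carrier G \<Longrightarrow> y \<in> carrier G \<Longrightarrow> wlen y \<le> wlen x + wdist x y"
  using wdist_triangle[of \<one> x y] by simp

lemma wlen_triangle': "x \<in> carrier G \<Longrightarrow> y \<in> carrier G \<Longrightarrow> wlen x \<le> wlen y + wdist x y"
  using wdist_triangle[of \<one> y x] wdist_sym[of x y] by simp

lemma bounded_subset_wball:
  assumes "K \<subseteq> carrier G" "bounded_in (word_dist G S) K" shows "\<exists>m. K \<subseteq> wball m"
proof (cases "K = {}")
  case False
  then obtain k0 where k0: "k0 \<in> K" by blast
  obtain c where c: "\<forall>x\<in>K. \<forall>y\<in>K. word_dist G S x y \<le> c" using assms unfolding bounded_in_def by blast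
  have "K \<subseteq> wball (wlen k0 + nat \<lceil>c\<rceil>)"
  proof
    fix z assume z: "z \<in> K"
    have "real (wdist k0 z) \<le> c" using c k0 z by (simp add: word_dist_eq_wdist)
    then have "wdist k0 z \<le> nat \<lceil>c\<rceil>" by linarith
    moreover have "k0 \<in> carrier G" "z \<in> carrier G" using assms(1) k0 z by auto
    ultimately show "z \<in> wball (wlen k0 + nat \<lceil>c\<rceil>)"
      using wlen_triangle[of k0 z] by (simp add: wball_def)
  qed
  then show ?thesis by blast
qed simp

definition walk :: "'g set \<Rightarrow> (nat \<Rightarrow> 'g) \<Rightarrow> nat \<Rightarrow> 'g \<Rightarrow> 'g \<Rightarrow> bool" where
  "walk K p L x y \<longleftrightarrow> p 0 = x \<and> p L = y \<and> (\<forall>i. p i \<in> carrier G \<and> p i \<notin> K) \<and>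
     (\<forall>i. wdist (p i) (p (Suc i)) \<le> 1) \<and> (\<forall>i\<ge>L. p i = y)"

lemma walk_Suc_len: "walk K p L x y \<Longrightarrow> walk K p (Suc L) x y"
  unfolding walk_def by auto

lemma geodesic_walk_exists:
  assumes x: "x \<in> carrier G" and y: "y \<in> carrier G"
  shows "\<exists>p. walk {} p (wdist x y) x y"
proof -
  obtain w where w: "is_word w" "length w = wdist x y" "x \<otimes> ev w = y"
    using geodesic_word_exists[OF x y] by blast
  define p where "p i = x \<otimes> ev (take i w)" for i
  have pc: "p i \<in> carrier G" for i unfolding p_def using x ev_in_carrier[OF is_word_take[OF w(1)]] by simp
  have pL: "p i = y" if "i \<ge> wdist x y" for i unfolding p_def using that w by simp
  have step: "wdist (p i) (p (Suc i)) \<le> 1" for i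
  proof (cases "i < length w")
    case True
    obtain s b where sb: "w ! i = (s, b)" by (cases "w ! i")
    have sS: "s \<in> S" using w(1) True sb unfolding is_word_def
      by (metis fst_conv length_map nth_map nth_mem subsetD)
    have "take (Suc i) w = take i w @ [(s, b)]" using True sb by (simp add: take_Suc_conv_app_nth)
    then have "p (Suc i) = p i \<otimes> (if b then s else inv s)"
      unfolding p_def using x sS gens_carrier is_word_take[OF w(1)] ev_in_carrier
      by (auto simp: ev_append ev_Cons m_assoc)
    then show ?thesis using wdist_letter_le_1[OF pc[of i] sS, of b] by simp
  next
    case False
    then show ?thesis using pL w(2) y by simp
  qed
  have "walk {} p (wdist x y) x y" unfolding walk_def using pc pL step x by (auto simp: p_def)
  then show ?thesis by blast
qed

lemma unit_steps_wdist_le: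
  assumes "\<And>i. p i \<in> carrier G" "\<And>i. wdist (p i) (p (Suc i)) \<le> 1" and "i \<le> j + k" "j \<le> i + k"
  shows "wdist (p i) (p j) \<le> k"
proof -
  have *: "wdist (p i) (p (i + k)) \<le> k" for i k
  proof (induction k)
    case (Suc k)
    have "wdist (p i) (p (i + Suc k)) \<le> wdist (p i) (p (i + k)) + wdist (p (i + k)) (p (Suc (i + k)))"
      using wdist_triangle assms(1) by simp
    also have "\<dots> \<le> k + 1" using Suc.IH assms(2) by (metis add_mono)
    finally show ?case by simp
  qed (simp add: assms(1))
  show ?thesis
  proof (cases "i \<le> j")
    case True
    then have "wdist (p i) (p j) \<le> j - i" using *[of i "j - i"] by simp
    then show ?thesis using assms(4) by linarith
  next
    case False
    then have "wdist (p j) (p i) \<le> i - j" using *[of j "i - j"] by simp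
    then show ?thesis using assms(3) wdist_sym assms(1) by (metis diff_le_mono le_diff_conv le_trans add.commute)
  qed
qed

lemma walk_wdist_le: "walk K p L x y \<Longrightarrow> i \<le> j + k \<Longrightarrow> j \<le> i + k \<Longrightarrow> wdist (p i) (p j) \<le> k"
  by (rule unit_steps_wdist_le) (simp_all add: walk_def)

definition chosen_walk :: "'g set \<Rightarrow> 'g \<Rightarrow> 'g \<Rightarrow> (nat \<Rightarrow> 'g) \<times> nat" where
  "chosen_walk K x y = (SOME (p, L). walk K p L x y)"

lemma walk_chosen_walk:
  assumes "\<exists>p L. walk K p L x y"
  shows "walk K (fst (chosen_walk K x y)) (snd (chosen_walk K x y)) x y"
proof -
  obtain p L where "walk K p L x y" using assms by blast
  then show ?thesis
    using someI[of "\<lambda>(p, L). walk K p L x y" "(p, L)"] by (simp add: chosen_walk_def case_prod_beta)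
qed

definition cayley_edges :: "'g set \<Rightarrow> ('g \<times> 'g) set" where
  "cayley_edges K = {(a, b). a \<in> carrier G - K \<and> b \<in> carrier G - K \<and> word_dist G S a b = 1}"

lemma conn_avoid_iff_rtrancl: "conn_avoid G S K x y \<longleftrightarrow> (x, y) \<in> (cayley_edges K)\<^sup>*"
  unfolding conn_avoid_def cayley_edges_def by simp

lemma converse_cayley_edges: "(cayley_edges K)\<inverse> = cayley_edges K"
  unfolding cayley_edges_def by (auto simp: word_dist_eq_wdist wdist_sym)

lemma conn_avoid_sym: "conn_avoid G S K x y \<Longrightarrow> conn_avoid G S K y x"
  unfolding conn_avoid_iff_rtrancl by (metis converse_cayley_edges rtrancl_converseI)

lemma conn_avoid_trans: "conn_avoid G S K x y \<Longrightarrow> conn_avoid G S K y z \<Longrightarrow> conn_avoid G S K x z"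
  unfolding conn_avoid_iff_rtrancl by (rule rtrancl_trans)

lemma conn_avoid_target: "conn_avoid G S K x y \<Longrightarrow> y = x \<or> (y \<in> carrier G \<and> y \<notin> K)"
  unfolding conn_avoid_iff_rtrancl by (induction rule: rtrancl_induct) (auto simp: cayley_edges_def)

lemma walk_imp_conn_avoid:
  assumes "walk K p L x y" shows "conn_avoid G S K x y"
proof -
  have "(x, p i) \<in> (cayley_edges K)\<^sup>*" for i
  proof (induction i)
    case 0 then show ?case using assms by (simp add: walk_def)
  next
    case (Suc i)
    show ?case
    proof (cases "p i = p (Suc i)")
      case True then show ?thesis using Suc by simp
    next
      case False
      have pc: "p i \<in> carrier G - K" "p (Suc i) \<in> carrier G - K" "wdist (p i) (p (Suc i)) \<le> 1"
        using assms by (auto simp: walk_def)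
      then have "wdist (p i) (p (Suc i)) = 1" using wdist_eq_0_imp_eq False by fastforce
      then have "(p i, p (Suc i)) \<in> cayley_edges K" using pc by (simp add: cayley_edges_def word_dist_eq_wdist)
      with Suc show ?thesis by (rule rtrancl_into_rtrancl)
    qed
  qed
  from this[of L] show ?thesis using assms by (simp add: walk_def conn_avoid_iff_rtrancl)
qed

lemma conn_avoid_imp_walk:
  assumes "conn_avoid G S K x y" "x \<in> carrier G" "x \<notin> K"
  shows "\<exists>p L. walk K p L x y"
proof -
  have "(x, y) \<in> (cayley_edges K)\<^sup>*" using assms(1) by (simp add: conn_avoid_iff_rtrancl)
  then show ?thesis
  proof (induction rule: rtrancl_induct)
    case base
    have "walk K (\<lambda>_. x) 0 x x" using assms by (simp add: walk_def)
    then show ?case by blast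
  next
    case (step y z)
    then obtain p L where pL: "walk K p L x y" by blast
    have yz: "y \<in> carrier G" "z \<in> carrier G" "y \<notin> K" "z \<notin> K" "wdist y z = 1"
      using step(2) by (auto simp: cayley_edges_def word_dist_eq_wdist)
    define p' where "p' i = (if i \<le> L then p i else z)" for i
    have "wdist (p' i) (p' (Suc i)) \<le> 1" for i
    proof (cases "i < L")
      case True then show ?thesis using pL by (simp add: p'_def walk_def)
    next
      case False then show ?thesis using pL yz by (cases "i = L") (auto simp: p'_def walk_def)
    qed
    then have "walk K p' (Suc L) x z"
      using pL yz unfolding walk_def by (auto simp: p'_def)
    then show ?case by blast
  qed
qed

end

section \<open>Ends and a proper ray\<close>

locale one_ended_word_group = word_group G S for G :: "('g, 'b) monoid_scheme" (structure) and S +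
  assumes one_ended: "one_ended G S"
begin

abbreviation component where "component K x \<equiv> {y. conn_avoid G S K x y}"

lemma infinite_carrier: "infinite (carrier G)"
proof
  assume fin: "finite (carrier G)"
  obtain x where x: "x \<in> carrier G" "infinite (component {} x)"
    using one_ended unfolding one_ended_def by blast
  have "component {} x \<subseteq> carrier G" using conn_avoid_target x(1) by blast
  then show False using fin x(2) finite_subset by blast
qed

lemma exists_wlen_ge: "\<exists>y\<in>carrier G. R \<le> wlen y"
proof (rule ccontr)
  assume "\<not> ?thesis"
  then have "carrier G \<subseteq> wball R" by (auto simp: wball_def)
  then show False using infinite_carrier finite_wball finite_subset by blast
qed

lemma conn_avoid_wball_to_sphere:
  assumes y: "y \<in> carrier G" "y \<notin> wball m"
  shows "\<exists>z \<in> wball (Suc m) - wball m. conn_avoid G S (wball m) y z"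
proof -
  let ?K = "wball m"
  obtain p where p: "walk {} p (wdist y \<one>) y \<one>" using geodesic_walk_exists y by auto
  have pc: "\<And>j. p j \<in> carrier G" using p by (simp add: walk_def)
  have ex: "\<exists>i. p i \<in> ?K" using p one_in_wball unfolding walk_def by metis
  define i where "i = (LEAST i. p i \<in> ?K)"
  have piK: "p i \<in> ?K" unfolding i_def using LeastI_ex[OF ex] .
  have notK: "p j \<notin> ?K" if "j < i" for j using not_less_Least[of j "\<lambda>i. p i \<in> ?K"] that i_def by blast
  have i0: "i \<noteq> 0"
  proof
    assume "i = 0" then show False using piK p y(2) by (simp add: walk_def)
  qed
  define z where "z = p (i - 1)"
  have "wdist (p (i - 1)) (p i) \<le> 1" using p i0 unfolding walk_def by (metis Suc_pred' neq0_conv)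
  then have "wdist (p i) z \<le> 1" unfolding z_def using wdist_sym pc by metis
  then have "wlen z \<le> Suc m" using wlen_triangle[OF pc[of i], of z] piK pc by (simp add: z_def wball_def)
  moreover have "z \<notin> ?K" unfolding z_def using notK i0 by simp
  ultimately have z: "z \<in> wball (Suc m) - ?K" using pc by (simp add: z_def wball_def)
  define q where "q j = p (min j (i - 1))" for j
  have "walk ?K q (i - 1) y z"
    unfolding walk_def
  proof (intro conjI allI impI)
    show "q 0 = y" using p by (simp add: q_def walk_def)
    show "q (i - 1) = z" by (simp add: q_def z_def)
    fix j
    show "q j \<in> carrier G" using pc by (simp add: q_def)
    show "q j \<notin> ?K" unfolding q_def using notK i0 by simp
    show "wdist (q j) (q (Suc j)) \<le> 1"
    proof (cases "j < i - 1")
      case True then show ?thesis using p by (simp add: q_def walk_def)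
    next
      case False then show ?thesis using pc by (simp add: q_def)
    qed
  next
    fix j assume "i - 1 \<le> j" then show "q j = z" by (simp add: q_def z_def)
  qed
  then show ?thesis using z walk_imp_conn_avoid by blast
qed

lemma far_points_conn_avoid:
  "\<exists>R. \<forall>x\<in>carrier G. \<forall>y\<in>carrier G. R \<le> wlen x \<longrightarrow> R \<le> wlen y \<longrightarrow> conn_avoid G S (wball m) x y"
proof -
  let ?K = "wball m"
  obtain x0 where
    main: "\<And>y. y \<in> carrier G - ?K \<Longrightarrow> infinite (component ?K y) \<Longrightarrow> conn_avoid G S ?K x0 y"
    using one_ended finite_wball[of m] unfolding one_ended_def by blast
  define F where "F = (\<Union>z\<in>{z \<in> wball (Suc m) - ?K. finite (component ?K z)}. component ?K z)"
  have "finite F" unfolding F_def using finite_wball[of "Suc m"] by auto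
  then obtain R1 where R1: "\<And>z. z \<in> F \<Longrightarrow> wlen z < R1"
    using finite_nat_set_iff_bounded[of "wlen ` F"] by blast
  have to_main: "conn_avoid G S ?K x0 y" if y: "y \<in> carrier G" "R1 + m + 1 \<le> wlen y" for y
  proof -
    have yK: "y \<notin> ?K" using y by (auto simp: wball_def)
    have "finite (component ?K y) \<Longrightarrow> False"
    proof -
      assume fin: "finite (component ?K y)"
      obtain z where z: "z \<in> wball (Suc m) - ?K" "conn_avoid G S ?K y z"
        using conn_avoid_wball_to_sphere[OF y(1) yK] by blast
      have "component ?K z \<subseteq> component ?K y" using z(2) conn_avoid_trans by blast
      then have "finite (component ?K z)" using fin finite_subset by blast
      moreover have "y \<in> component ?K z" using conn_avoid_sym[OF z(2)] by simp
      ultimately have "y \<in> F" unfolding F_def using z(1) by blast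
      then show False using R1 y(2) by fastforce
    qed
    then show ?thesis using main y yK by blast
  qed
  show ?thesis
  proof (intro exI[of _ "R1 + m + 1"] ballI impI)
    fix x y assume "x \<in> carrier G" "y \<in> carrier G" "R1 + m + 1 \<le> wlen x" "R1 + m + 1 \<le> wlen y"
    then have "conn_avoid G S ?K x0 x" "conn_avoid G S ?K x0 y" using to_main by auto
    then show "conn_avoid G S ?K x y" using conn_avoid_sym conn_avoid_trans by metis
  qed
qed

definition conn_radius :: "nat \<Rightarrow> nat" where
  "conn_radius m = (SOME R. \<forall>x\<in>carrier G. \<forall>y\<in>carrier G.
     R \<le> wlen x \<longrightarrow> R \<le> wlen y \<longrightarrow> conn_avoid G S (wball m) x y)"

lemma conn_avoid_beyond_conn_radius:
  "\<lbrakk>x \<in> carrier G; y \<in> carrier G; conn_radius m \<le> wlen x; conn_radius m \<le> wlen y\<rbrakk>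
    \<Longrightarrow> conn_avoid G S (wball m) x y"
  using someI_ex[OF far_points_conn_avoid[of m]] unfolding conn_radius_def by blast

definition radius :: "nat \<Rightarrow> nat" where "radius k = k + (\<Sum>j<k. conn_radius j)"

lemma strict_mono_radius: "strict_mono radius"
  by (simp add: strict_mono_Suc_iff radius_def)

lemma radius_0[simp]: "radius 0 = 0"
  by (simp add: radius_def)

lemma conn_radius_le_radius: "conn_radius k \<le> radius (Suc k)"
  by (simp add: radius_def)

definition anchor :: "nat \<Rightarrow> 'g" where
  "anchor k = (SOME y. y \<in> carrier G \<and> radius (Suc k) \<le> wlen y)"

lemma anchor_in_carrier: "anchor k \<in> carrier G" and anchor_far: "radius (Suc k) \<le> wlen (anchor k)"
proof -
  have "\<exists>y. y \<in> carrier G \<and> radius (Suc k) \<le> wlen y" using exists_wlen_ge by blast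
  from someI_ex[OF this] show "anchor k \<in> carrier G" "radius (Suc k) \<le> wlen (anchor k)"
    unfolding anchor_def by auto
qed

lemma walk_from_anchor_exists:
  assumes "c \<in> carrier G" "radius (Suc k) \<le> wlen c"
  shows "\<exists>p L. walk (wball k) p L (anchor k) c"
proof (rule conn_avoid_imp_walk)
  have "conn_radius k \<le> wlen (anchor k)" "conn_radius k \<le> wlen c"
    using conn_radius_le_radius[of k] anchor_far[of k] assms(2) by linarith+
  then show "conn_avoid G S (wball k) (anchor k) c"
    using conn_avoid_beyond_conn_radius anchor_in_carrier assms(1) by blast
  show "anchor k \<notin> wball k"
    using anchor_far[of k] strict_mono_imp_increasing[OF strict_mono_radius, of "Suc k"]
    by (simp add: wball_def)
qed (rule anchor_in_carrier)

definition leg :: "nat \<Rightarrow> nat \<Rightarrow> 'g" where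
  "leg k = fst (chosen_walk (wball k) (anchor k) (anchor (Suc k)))"

text \<open>The length is shifted by one so that every leg has positive length.\<close>
definition leg_len :: "nat \<Rightarrow> nat" where
  "leg_len k = Suc (snd (chosen_walk (wball k) (anchor k) (anchor (Suc k))))"

lemma leg_walk: "walk (wball k) (leg k) (leg_len k) (anchor k) (anchor (Suc k))"
proof -
  have "radius (Suc k) \<le> radius (Suc (Suc k))"
    using strict_mono_less_eq[OF strict_mono_radius] by simp
  then have "radius (Suc k) \<le> wlen (anchor (Suc k))" using anchor_far[of "Suc k"] by linarith
  then have "\<exists>p L. walk (wball k) p L (anchor k) (anchor (Suc k))"
    using walk_from_anchor_exists anchor_in_carrier by blast
  then show ?thesis unfolding leg_def leg_len_def by (intro walk_Suc_len walk_chosen_walk)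
qed

definition leg_start :: "nat \<Rightarrow> nat" where "leg_start k = (\<Sum>j<k. leg_len j)"

lemma strict_mono_leg_start: "strict_mono leg_start"
  unfolding leg_start_def by (rule strict_mono_partial_sums) (simp add: leg_len_def)

lemma leg_start_0[simp]: "leg_start 0 = 0"
  by (simp add: leg_start_def)

lemma leg_start_Suc: "leg_start (Suc k) = leg_start k + leg_len k"
  by (simp add: leg_start_def)

definition ray :: "nat \<Rightarrow> 'g" where
  "ray n = leg (interval_index leg_start n) (n - leg_start (interval_index leg_start n))"

lemmas leg_index_lower = interval_index_lower[OF strict_mono_leg_start leg_start_0]
lemmas leg_index_upper = interval_index_upper[OF strict_mono_leg_start leg_start_0]
lemmas leg_index_eq = interval_index_eq[OF strict_mono_leg_start leg_start_0]

lemma ray_leg_start: "ray (leg_start k) = anchor k"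
  using leg_index_eq[of k "leg_start k"] leg_walk[of k]
  by (simp add: ray_def leg_start_Suc leg_len_def walk_def)

lemma ray_in_carrier: "ray n \<in> carrier G"
  using leg_walk by (simp add: ray_def walk_def)

lemma ray_step: "wdist (ray n) (ray (Suc n)) \<le> 1"
proof -
  let ?k = "interval_index leg_start n"
  have n: "leg_start ?k \<le> n" "n < leg_start ?k + leg_len ?k"
    using leg_index_lower[of n] leg_index_upper[of n] by (simp_all add: leg_start_Suc)
  have "ray n = leg ?k (n - leg_start ?k)" by (simp add: ray_def)
  moreover have "ray (Suc n) = leg ?k (Suc (n - leg_start ?k))"
  proof (cases "Suc n < leg_start ?k + leg_len ?k")
    case True
    then have "interval_index leg_start (Suc n) = ?k"
      using n by (intro leg_index_eq) (simp_all add: leg_start_Suc)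
    then show ?thesis using n by (simp add: ray_def Suc_diff_le)
  next
    case False
    then have "Suc n = leg_start (Suc ?k)" using n by (simp add: leg_start_Suc)
    then have "ray (Suc n) = anchor (Suc ?k)" by (simp add: ray_leg_start)
    also have "\<dots> = leg ?k (Suc (n - leg_start ?k))"
      using leg_walk[of ?k] False n by (simp add: walk_def)
    finally show ?thesis .
  qed
  ultimately show ?thesis using leg_walk[of ?k] by (simp add: walk_def)
qed

lemma ray_wdist_le: "a \<le> b + k \<Longrightarrow> b \<le> a + k \<Longrightarrow> wdist (ray a) (ray b) \<le> k"
  by (rule unit_steps_wdist_le[of ray, OF ray_in_carrier ray_step])

lemma ray_avoids: "interval_index leg_start n < wlen (ray n)"
  using leg_walk ray_in_carrier[of n] by (simp add: ray_def walk_def wball_def not_le)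

lemma finite_ray_preimage: "finite {n. wlen (ray n) \<le> m}"
proof -
  have "n < leg_start m" if "wlen (ray n) \<le> m" for n
    using that ray_avoids[of n] leg_index_upper[of n]
      strict_mono_less_eq[OF strict_mono_leg_start, of "Suc (interval_index leg_start n)" m]
    by linarith
  then have "{n. wlen (ray n) \<le> m} \<subseteq> {..< leg_start m}" by blast
  then show ?thesis using finite_subset by blast
qed

definition level :: "'g \<Rightarrow> nat" where "level c = interval_index radius (wlen c)"

lemma level_lower: "radius (level c) \<le> wlen c"
  unfolding level_def by (rule interval_index_lower[OF strict_mono_radius radius_0])

lemma level_upper: "wlen c < radius (Suc (level c))"
  unfolding level_def by (rule interval_index_upper[OF strict_mono_radius radius_0])

definition link_obstacle :: "'g \<Rightarrow> 'g set" where
  "link_obstacle c = (if level c = 0 then {} else wball (level c - 1))"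

definition link_start :: "'g \<Rightarrow> nat" where "link_start c = leg_start (level c - 1)"

lemma link_exists:
  assumes "c \<in> carrier G" shows "\<exists>p L. walk (link_obstacle c) p L (ray (link_start c)) c"
proof (cases "level c")
  case 0
  then show ?thesis
    using geodesic_walk_exists[OF anchor_in_carrier assms, of 0] ray_leg_start[of 0]
    by (auto simp: link_obstacle_def link_start_def)
next
  case (Suc l)
  then show ?thesis
    using walk_from_anchor_exists[OF assms] level_lower[of c]
    by (simp add: link_obstacle_def link_start_def ray_leg_start)
qed

definition link :: "'g \<Rightarrow> nat \<Rightarrow> 'g" where
  "link c = fst (chosen_walk (link_obstacle c) (ray (link_start c)) c)"

definition link_len :: "'g \<Rightarrow> nat" where
  "link_len c = snd (chosen_walk (link_obstacle c) (ray (link_start c)) c)"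

lemma link_walk: "c \<in> carrier G \<Longrightarrow> walk (link_obstacle c) (link c) (link_len c) (ray (link_start c)) c"
  unfolding link_def link_len_def by (intro walk_chosen_walk link_exists)

lemma finite_link_hits: "finite {c \<in> carrier G. link_start c \<le> m \<or> (\<exists>i. wlen (link c i) \<le> m)}"
proof -
  have level_le: "level c \<le> Suc m" if c: "c \<in> carrier G" "link_start c \<le> m \<or> (\<exists>i. wlen (link c i) \<le> m)" for c
  proof (cases "level c")
    case (Suc l)
    have "l \<le> m"
    proof (cases "link_start c \<le> m")
      case True
      then show ?thesis
        using Suc strict_mono_imp_increasing[OF strict_mono_leg_start, of l] by (simp add: link_start_def)
    next
      case False
      then obtain i where "wlen (link c i) \<le> m" using c by blast
      moreover have "link c i \<notin> wball l" using link_walk[OF c(1)] Suc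
        by (simp add: walk_def link_obstacle_def)
      ultimately show ?thesis using link_walk[OF c(1)] by (auto simp: walk_def wball_def)
    qed
    then show ?thesis using Suc by simp
  qed simp
  have "{c \<in> carrier G. link_start c \<le> m \<or> (\<exists>i. wlen (link c i) \<le> m)} \<subseteq> wball (radius (Suc (Suc m)))"
  proof
    fix c assume c: "c \<in> {c \<in> carrier G. link_start c \<le> m \<or> (\<exists>i. wlen (link c i) \<le> m)}"
    then have "radius (Suc (level c)) \<le> radius (Suc (Suc m))"
      using level_le strict_mono_less_eq[OF strict_mono_radius] by simp
    then show "c \<in> wball (radius (Suc (Suc m)))" using level_upper[of c] c by (simp add: wball_def)
  qed
  then show ?thesis using finite_wball finite_subset by blast
qed

definition ray_map :: "real \<Rightarrow> 'g" where "ray_map t = ray (nat \<lfloor>t\<rfloor>)"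

lemma controlled_ray_map: "controlled {0..} real_dist (word_dist G S) ray_map"
  unfolding controlled_def
proof (intro allI impI)
  fix r :: real assume r: "0 < r"
  show "\<exists>B>0. \<forall>t\<in>{0..}. \<forall>t'\<in>{0..}. real_dist t t' < r \<longrightarrow> word_dist G S (ray_map t) (ray_map t') < B"
  proof (intro exI[of _ "r + 2"] conjI ballI impI)
    fix t t' :: real assume t: "t \<in> {0..}" "t' \<in> {0..}" and d: "real_dist t t' < r"
    have "nat \<lfloor>t\<rfloor> \<le> nat \<lfloor>t'\<rfloor> + nat \<lceil>r\<rceil>" "nat \<lfloor>t'\<rfloor> \<le> nat \<lfloor>t\<rfloor> + nat \<lceil>r\<rceil>"
      using nat_floor_le_add_ceiling[of t t' r] nat_floor_le_add_ceiling[of t' t r] t d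
      by (auto simp: real_dist_def abs_minus_commute)
    then have "wdist (ray_map t) (ray_map t') \<le> nat \<lceil>r\<rceil>" unfolding ray_map_def by (rule ray_wdist_le)
    moreover have "real (nat \<lceil>r\<rceil>) < r + 1" using r by linarith
    ultimately show "word_dist G S (ray_map t) (ray_map t') < r + 2" by (simp add: word_dist_eq_wdist)
  qed (use r in simp)
qed

lemma metric_proper_ray_map: "metric_proper {0..} real_dist (carrier G) (word_dist G S) ray_map"
  unfolding metric_proper_def
proof (intro allI impI)
  fix K assume K: "K \<subseteq> carrier G" "bounded_in (word_dist G S) K"
  obtain m where m: "K \<subseteq> wball m" using bounded_subset_wball[OF K] by blast
  obtain B where B: "\<And>n. wlen (ray n) \<le> m \<Longrightarrow> n < B"
    using finite_ray_preimage[of m] finite_nat_set_iff_bounded[of "{n. wlen (ray n) \<le> m}"] by auto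
  have "t \<le> real B" if "t \<in> {t \<in> {0..}. ray_map t \<in> K}" for t
  proof -
    have "nat \<lfloor>t\<rfloor> < B" using that m B by (auto simp: ray_map_def wball_def)
    then show ?thesis using that by linarith
  qed
  then show "bounded_in real_dist {t \<in> {0..}. ray_map t \<in> K}"
    unfolding bounded_in_def real_dist_def
  proof (intro exI[of _ "real B"] ballI)
    fix a b assume "\<And>t. t \<in> {t \<in> {0..}. ray_map t \<in> K} \<Longrightarrow> t \<le> real B"
      "a \<in> {t \<in> {0..}. ray_map t \<in> K}" "b \<in> {t \<in> {0..}. ray_map t \<in> K}"
    then have "0 \<le> a" "a \<le> real B" "0 \<le> b" "b \<le> real B" by auto
    then show "\<bar>a - b\<bar> \<le> real B" by linarith
  qed
qed

lemma coarse_ray_map: "coarse_map {0..} real_dist (carrier G) (word_dist G S) ray_map"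
  using controlled_ray_map metric_proper_ray_map ray_in_carrier by (auto simp: coarse_map_def ray_map_def)

end

locale bicombed_word_group = word_group G S for G :: "('g, 'b) monoid_scheme" (structure) and S +
  fixes C :: "'g \<Rightarrow> 'g \<Rightarrow> nat \<Rightarrow> 'g"
  assumes bicombing: "bicombing (carrier G) (word_dist G S) C"
begin

lemma comb_in_carrier: "p \<in> carrier G \<Longrightarrow> x \<in> carrier G \<Longrightarrow> C p x n \<in> carrier G"
  using bicombing by (simp add: bicombing_def)

lemma comb_0: "p \<in> carrier G \<Longrightarrow> x \<in> carrier G \<Longrightarrow> C p x 0 = p"
  using bicombing by (simp add: bicombing_def)

lemma comb_diag: "p \<in> carrier G \<Longrightarrow> C p p n = p"
  using bicombing by (simp add: bicombing_def)

lemma comb_eventually_const: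
  assumes "p \<in> carrier G" "K \<subseteq> carrier G" "finite K"
  shows "\<exists>N. \<forall>x\<in>K. \<forall>n\<ge>N. C p x n = x"
  using bicombing assms finite_bounded_in[OF assms(3)] unfolding bicombing_def by blast

lemma comb_controlled_nat:
  "\<exists>B::nat. \<forall>p p' x x' n n'. p \<in> carrier G \<longrightarrow> p' \<in> carrier G \<longrightarrow> x \<in> carrier G \<longrightarrow> x' \<in> carrier G \<longrightarrow>
     wdist p p' \<le> R \<longrightarrow> wdist x x' \<le> R \<longrightarrow> n \<le> n' + R \<longrightarrow> n' \<le> n + R \<longrightarrow> wdist (C p x n) (C p' x' n') \<le> B"
proof -
  let ?M = "carrier G \<times> carrier G \<times> (UNIV :: nat set)"
  let ?d = "prod_dist (word_dist G S) (prod_dist (word_dist G S) nat_dist)"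
  have "controlled ?M ?d (word_dist G S) (\<lambda>(p, x, n). C p x n)"
    using bicombing by (simp add: bicombing_def)
  then obtain B where B: "\<forall>u\<in>?M. \<forall>v\<in>?M. ?d u v < real R + 1 \<longrightarrow>
      word_dist G S ((\<lambda>(p, x, n). C p x n) u) ((\<lambda>(p, x, n). C p x n) v) < B"
    unfolding controlled_def by (metis add_pos_nonneg of_nat_0_le_iff zero_less_one add.commute)
  show ?thesis
  proof (intro exI[of _ "nat \<lceil>B\<rceil>"] allI impI)
    fix p p' x x' n n'
    assume h: "p \<in> carrier G" "p' \<in> carrier G" "x \<in> carrier G" "x' \<in> carrier G"
      "wdist p p' \<le> R" "wdist x x' \<le> R" "n \<le> n' + R" "n' \<le> n + R"
    have "nat_dist n n' \<le> real R" using h(7,8) unfolding nat_dist_def by linarith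
    then have "?d (p, x, n) (p', x', n') < real R + 1"
      using h(5,6) unfolding prod_dist_def by (simp add: word_dist_eq_wdist)
    then have "word_dist G S (C p x n) (C p' x' n') < B" using B h(1-4) by fastforce
    then show "wdist (C p x n) (C p' x' n') \<le> nat \<lceil>B\<rceil>" by (simp add: word_dist_eq_wdist) linarith
  qed
qed

definition comb_bound :: "nat \<Rightarrow> nat" where
  "comb_bound R = (SOME B. \<forall>p p' x x' n n'. p \<in> carrier G \<longrightarrow> p' \<in> carrier G \<longrightarrow> x \<in> carrier G \<longrightarrow>
     x' \<in> carrier G \<longrightarrow> wdist p p' \<le> R \<longrightarrow> wdist x x' \<le> R \<longrightarrow> n \<le> n' + R \<longrightarrow> n' \<le> n + R \<longrightarrow>
     wdist (C p x n) (C p' x' n') \<le> B)"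

lemma wdist_comb_le_comb_bound:
  assumes "p \<in> carrier G" "p' \<in> carrier G" "x \<in> carrier G" "x' \<in> carrier G"
    "wdist p p' \<le> R" "wdist x x' \<le> R" "n \<le> n' + R" "n' \<le> n + R"
  shows "wdist (C p x n) (C p' x' n') \<le> comb_bound R"
  using someI_ex[OF comb_controlled_nat[of R]] assms unfolding comb_bound_def by blast

lemma wdist_comb_start_le:
  "c \<in> carrier G \<Longrightarrow> x \<in> carrier G \<Longrightarrow> wdist c x \<le> R \<Longrightarrow> wdist c (C c x n) \<le> comb_bound R"
  using wdist_comb_le_comb_bound[of c c c x R n n] comb_diag[of c n] by simp

end

section \<open>A criterion for coarse categoricity\<close>

locale centered_set = one_ended_word_group G S + bicombed_word_group G S C
  for G :: "('g, 'b) monoid_scheme" (structure) and S C +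
  fixes A :: "'g set" and ctr :: "'g \<Rightarrow> 'g"
  assumes A_subset: "A \<subseteq> carrier G" and ctr_in_carrier: "\<And>x. x \<in> A \<Longrightarrow> ctr x \<in> carrier G"
    and finite_comb_hits: "\<And>m. finite {x\<in>A. \<exists>n. wlen (C (ctr x) x n) \<le> m}"
    and finite_ctr_jumps: "\<And>r. finite {x\<in>A. \<exists>y\<in>A. wdist x y < r \<and> ctr x \<noteq> ctr y}"
begin

lemma A_carrier: "x \<in> A \<Longrightarrow> x \<in> carrier G"
  using A_subset by auto

lemma finite_ctr_preimage: assumes "finite F" shows "finite {x\<in>A. ctr x \<in> F}"
proof -
  obtain b where b: "\<And>z. z \<in> F \<Longrightarrow> wlen z \<le> b"
    using assms finite_nat_set_iff_bounded_le[of "wlen ` F"] by auto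
  have "{x\<in>A. ctr x \<in> F} \<subseteq> {x\<in>A. \<exists>n. wlen (C (ctr x) x n) \<le> b}"
    using b comb_0 ctr_in_carrier A_carrier by (force intro: exI[of _ 0])
  then show ?thesis using finite_comb_hits finite_subset by blast
qed

lemma finite_link_hits_ctr: "finite {x\<in>A. link_start (ctr x) \<le> m \<or> (\<exists>i. wlen (link (ctr x) i) \<le> m)}"
proof (rule finite_subset[OF _ finite_ctr_preimage[OF finite_link_hits[of m]]])
  show "{x\<in>A. link_start (ctr x) \<le> m \<or> (\<exists>i. wlen (link (ctr x) i) \<le> m)} \<subseteq>
    {x\<in>A. ctr x \<in> {c \<in> carrier G. link_start c \<le> m \<or> (\<exists>i. wlen (link c i) \<le> m)}}"
    using ctr_in_carrier by auto
qed

definition comb_time :: "'g \<Rightarrow> nat" where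
  "comb_time c = (SOME N. \<forall>x\<in>{x\<in>A. ctr x = c}. \<forall>n\<ge>N. C c x n = x)"

lemma comb_at_comb_time: assumes "x \<in> A" "comb_time (ctr x) \<le> n" shows "C (ctr x) x n = x"
proof -
  have "\<exists>N. \<forall>y\<in>{y\<in>A. ctr y = ctr x}. \<forall>n\<ge>N. C (ctr x) y n = y"
    using finite_ctr_preimage[of "{ctr x}"] A_subset
    by (intro comb_eventually_const ctr_in_carrier assms(1)) auto
  from someI_ex[OF this] show ?thesis using assms unfolding comb_time_def by blast
qed

definition link_end :: "'g \<Rightarrow> nat" where "link_end x = link_start (ctr x) + link_len (ctr x)"

text \<open>For \<open>i \<le> link_start (ctr x)\<close> the truncated subtraction keeps the contraction at the ray
  point; this initial rest makes the length of the contraction a proper function.\<close>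
definition contraction :: "'g \<Rightarrow> nat \<Rightarrow> 'g" where
  "contraction x i = (if i \<le> link_end x then link (ctr x) (i - link_start (ctr x))
     else C (ctr x) x (i - link_end x))"

definition contraction_len :: "'g \<Rightarrow> nat" where "contraction_len x = link_end x + comb_time (ctr x)"

lemma link_walk_ctr:
  "x \<in> A \<Longrightarrow> walk (link_obstacle (ctr x)) (link (ctr x)) (link_len (ctr x)) (ray (link_start (ctr x))) (ctr x)"
  using link_walk ctr_in_carrier by blast

lemma contraction_in_carrier: "x \<in> A \<Longrightarrow> contraction x i \<in> carrier G"
  using link_walk_ctr comb_in_carrier ctr_in_carrier A_carrier by (auto simp: contraction_def walk_def)

lemma contraction_0: "x \<in> A \<Longrightarrow> contraction x 0 = ray (link_start (ctr x))"
  using link_walk_ctr by (simp add: contraction_def walk_def)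

lemma contraction_link_end: "x \<in> A \<Longrightarrow> contraction x (link_end x) = ctr x"
  using link_walk_ctr by (simp add: contraction_def walk_def link_end_def)

lemma contraction_len: assumes "x \<in> A" shows "contraction x (contraction_len x) = x"
proof (cases "comb_time (ctr x) = 0")
  case True
  then have "x = ctr x" using comb_at_comb_time[OF assms, of 0] comb_0 ctr_in_carrier A_carrier assms by simp
  then show ?thesis using True contraction_link_end[OF assms] by (simp add: contraction_len_def)
next
  case False
  then show ?thesis using comb_at_comb_time[OF assms] by (simp add: contraction_def contraction_len_def)
qed

lemma wdist_ctr_contraction:
  assumes x: "x \<in> A" and i: "link_end x \<le> i + R" "i \<le> link_end x + R"
  shows "wdist (ctr x) (contraction x i) \<le> R + comb_bound R"
proof (cases "i \<le> link_end x")
  case True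
  have "wdist (link (ctr x) (link_len (ctr x))) (link (ctr x) (i - link_start (ctr x))) \<le> R"
    using walk_wdist_le[OF link_walk_ctr[OF x]] True i by (auto simp: link_end_def)
  then show ?thesis using link_walk_ctr[OF x] True by (simp add: contraction_def walk_def)
next
  case False
  have "wdist (C (ctr x) x 0) (C (ctr x) x (i - link_end x)) \<le> comb_bound R"
    using ctr_in_carrier[OF x] A_carrier[OF x] False i by (intro wdist_comb_le_comb_bound) auto
  then show ?thesis using False comb_0 ctr_in_carrier[OF x] A_carrier[OF x] by (simp add: contraction_def)
qed

lemma contraction_close:
  assumes x: "x \<in> A" and y: "y \<in> A" and ctr_eq: "ctr x = ctr y" and d: "wdist x y \<le> R"
    and i: "i \<le> i' + R" "i' \<le> i + R"
  shows "wdist (contraction x i) (contraction y i') \<le> 2 * (R + comb_bound R)"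
proof -
  let ?c = "ctr x"
  have T: "link_end y = link_end x" using ctr_eq by (simp add: link_end_def)
  consider "i \<le> link_end x" "i' \<le> link_end x" | "\<not> i \<le> link_end x" "\<not> i' \<le> link_end x"
    | "link_end x \<le> i + R" "i \<le> link_end x + R" "link_end x \<le> i' + R" "i' \<le> link_end x + R"
    using i by linarith
  then show ?thesis
  proof cases
    case 1
    then show ?thesis using walk_wdist_le[OF link_walk_ctr[OF x]] i ctr_eq T
      by (auto simp: contraction_def split: if_splits)
  next
    case 2
    then have "wdist (C ?c x (i - link_end x)) (C ?c y (i' - link_end x)) \<le> comb_bound R"
      using ctr_in_carrier[OF x] A_carrier x y d i by (intro wdist_comb_le_comb_bound) auto
    then show ?thesis using 2 ctr_eq T by (simp add: contraction_def)
  next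
    case 3
    have "wdist (contraction x i) ?c \<le> R + comb_bound R"
      using wdist_ctr_contraction[OF x] 3 wdist_sym contraction_in_carrier x ctr_in_carrier by metis
    moreover have "wdist ?c (contraction y i') \<le> R + comb_bound R"
      using wdist_ctr_contraction[OF y] 3 ctr_eq T by simp
    ultimately show ?thesis
      using wdist_triangle[of "contraction x i" ?c "contraction y i'"]
        contraction_in_carrier x y ctr_in_carrier by fastforce
  qed
qed

lemma contraction_hits:
  assumes "x \<in> A" "wlen (contraction x i) \<le> m"
  shows "link_start (ctr x) \<le> m \<or> (\<exists>i. wlen (link (ctr x) i) \<le> m) \<or> (\<exists>n. wlen (C (ctr x) x n) \<le> m)"
  using assms by (auto simp: contraction_def split: if_splits)

definition ray_param :: "'g \<Rightarrow> real" where "ray_param x = real (link_start (ctr x))"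

definition homotopy_len :: "'g \<Rightarrow> real" where "homotopy_len x = real (contraction_len x)"

definition homotopy :: "'g \<times> real \<Rightarrow> 'g" where "homotopy u = contraction (fst u) (nat \<lfloor>snd u\<rfloor>)"

definition ctr_jumps :: "nat \<Rightarrow> 'g set" where
  "ctr_jumps R = {x\<in>A. \<exists>y\<in>A. wdist x y \<le> R \<and> ctr x \<noteq> ctr y}"

lemma finite_ctr_jumps_le: "finite (ctr_jumps R)"
proof (rule finite_subset[OF _ finite_ctr_jumps[of "Suc R"]])
  show "ctr_jumps R \<subseteq> {x\<in>A. \<exists>y\<in>A. wdist x y < Suc R \<and> ctr x \<noteq> ctr y}"
    unfolding ctr_jumps_def by (auto simp: less_Suc_eq_le)
qed

lemma mem_ctr_jumps:
  assumes "x \<in> A" "y \<in> A" "wdist x y \<le> R" "ctr x \<noteq> ctr y"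
  shows "x \<in> ctr_jumps R" "y \<in> ctr_jumps R"
proof -
  have "wdist y x \<le> R" using assms wdist_sym A_carrier by metis
  then show "x \<in> ctr_jumps R" "y \<in> ctr_jumps R" using assms unfolding ctr_jumps_def by auto
qed

lemma controlled_if_ctr_eq:
  assumes f: "\<And>x y. x \<in> A \<Longrightarrow> y \<in> A \<Longrightarrow> ctr x = ctr y \<Longrightarrow> f x = f y"
  shows "controlled A (word_dist G S) real_dist f"
  unfolding controlled_def
proof (intro allI impI)
  fix r :: real assume r: "0 < r"
  obtain B where B: "\<forall>x\<in>ctr_jumps (nat \<lceil>r\<rceil>). \<forall>y\<in>ctr_jumps (nat \<lceil>r\<rceil>). real_dist (f x) (f y) \<le> B"
    using finite_bounded_in[OF finite_ctr_jumps_le[of "nat \<lceil>r\<rceil>"], of "\<lambda>x y. real_dist (f x) (f y)"]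
    unfolding bounded_in_def by blast
  show "\<exists>B'>0. \<forall>x\<in>A. \<forall>y\<in>A. word_dist G S x y < r \<longrightarrow> real_dist (f x) (f y) < B'"
  proof (intro exI[of _ "max B 0 + 1"] conjI ballI impI)
    fix x y assume xy: "x \<in> A" "y \<in> A" "word_dist G S x y < r"
    have d: "wdist x y \<le> nat \<lceil>r\<rceil>" using xy(3) unfolding word_dist_eq_wdist by linarith
    show "real_dist (f x) (f y) < max B 0 + 1"
    proof (cases "ctr x = ctr y")
      case True then show ?thesis using f[OF xy(1,2)] by (simp add: real_dist_def)
    next
      case False then show ?thesis using B mem_ctr_jumps[OF xy(1,2) d] by fastforce
    qed
  qed simp
qed

lemma metric_proper_if_ge_link_start:
  assumes "\<And>x. x \<in> A \<Longrightarrow> real (link_start (ctr x)) \<le> f x"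
  shows "metric_proper A (word_dist G S) {0..} real_dist f"
  unfolding metric_proper_def
proof (intro allI impI)
  fix K assume "K \<subseteq> {0..}" "bounded_in real_dist K"
  then obtain b where b: "\<forall>k\<in>K. k \<le> b" using bounded_in_real_dist_imp_bdd_above by blast
  have "link_start (ctr x) \<le> nat \<lceil>b\<rceil>" if "x \<in> A" "f x \<in> K" for x
  proof -
    have "real (link_start (ctr x)) \<le> b" using assms[OF that(1)] b that(2) by fastforce
    then show ?thesis by linarith
  qed
  then have "{x \<in> A. f x \<in> K} \<subseteq> {x\<in>A. link_start (ctr x) \<le> nat \<lceil>b\<rceil> \<or> (\<exists>i. wlen (link (ctr x) i) \<le> nat \<lceil>b\<rceil>)}"
    by blast
  then have "finite {x \<in> A. f x \<in> K}" using finite_link_hits_ctr finite_subset by blast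
  then show "bounded_in (word_dist G S) {x \<in> A. f x \<in> K}" by (rule finite_bounded_in)
qed

lemma coarse_ray_param: "coarse_map A (word_dist G S) {0..} real_dist ray_param"
proof -
  have "controlled A (word_dist G S) real_dist ray_param"
    by (rule controlled_if_ctr_eq) (simp add: ray_param_def)
  moreover have "metric_proper A (word_dist G S) {0..} real_dist ray_param"
    by (rule metric_proper_if_ge_link_start) (simp add: ray_param_def)
  ultimately show ?thesis by (auto simp: coarse_map_def ray_param_def)
qed

lemma coarse_homotopy_len: "coarse_map A (word_dist G S) {0..} real_dist homotopy_len"
proof -
  have "controlled A (word_dist G S) real_dist homotopy_len"
    by (rule controlled_if_ctr_eq) (simp add: homotopy_len_def contraction_len_def link_end_def)
  moreover have "metric_proper A (word_dist G S) {0..} real_dist homotopy_len"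
    by (rule metric_proper_if_ge_link_start) (simp add: homotopy_len_def contraction_len_def link_end_def)
  ultimately show ?thesis by (auto simp: coarse_map_def homotopy_len_def)
qed

lemma cyl_homotopy_len_iff:
  "u \<in> cyl homotopy_len A \<longleftrightarrow> fst u \<in> A \<and> 0 \<le> snd u \<and> snd u \<le> homotopy_len (fst u)"
  by (cases u) (simp add: cyl_def)

lemma controlled_homotopy:
  "controlled (cyl homotopy_len A) (prod_dist (word_dist G S) real_dist) (word_dist G S) homotopy"
  unfolding controlled_def
proof (intro allI impI)
  fix r :: real assume r: "0 < r"
  define R where "R = nat \<lceil>r\<rceil>"
  define V where "V = (\<Union>x\<in>ctr_jumps R. contraction x ` {..contraction_len x})"
  have "finite V" unfolding V_def using finite_ctr_jumps_le by simp
  then obtain B where B: "\<forall>a\<in>V. \<forall>b\<in>V. word_dist G S a b \<le> B"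
    using finite_bounded_in unfolding bounded_in_def by blast
  show "\<exists>B'>0. \<forall>u\<in>cyl homotopy_len A. \<forall>v\<in>cyl homotopy_len A.
          prod_dist (word_dist G S) real_dist u v < r \<longrightarrow> word_dist G S (homotopy u) (homotopy v) < B'"
  proof (intro exI[of _ "max B (real (2 * (R + comb_bound R))) + 1"] conjI ballI impI)
    fix u v assume u: "u \<in> cyl homotopy_len A" and v: "v \<in> cyl homotopy_len A"
      and d: "prod_dist (word_dist G S) real_dist u v < r"
    obtain x t y s where uv: "u = (x, t)" "v = (y, s)" by (cases u, cases v)
    have x: "x \<in> A" "0 \<le> t" "t \<le> real (contraction_len x)"
      and y: "y \<in> A" "0 \<le> s" "s \<le> real (contraction_len y)"
      using u v uv by (auto simp: cyl_homotopy_len_iff homotopy_len_def)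
    have "word_dist G S x y < r" "real_dist t s < r" using d uv by (auto simp: prod_dist_def)
    then have wxy: "wdist x y \<le> R" and i: "nat \<lfloor>t\<rfloor> \<le> nat \<lfloor>s\<rfloor> + R" "nat \<lfloor>s\<rfloor> \<le> nat \<lfloor>t\<rfloor> + R"
      using nat_floor_le_add_ceiling[of t s r] nat_floor_le_add_ceiling[of s t r] x y
      by (auto simp: R_def word_dist_eq_wdist real_dist_def abs_minus_commute) linarith
    show "word_dist G S (homotopy u) (homotopy v) < max B (real (2 * (R + comb_bound R))) + 1"
    proof (cases "ctr x = ctr y")
      case True
      then show ?thesis using contraction_close[OF x(1) y(1) True wxy i] uv
        by (simp add: homotopy_def word_dist_eq_wdist)
    next
      case False
      have "x \<in> ctr_jumps R" "y \<in> ctr_jumps R" using mem_ctr_jumps[OF x(1) y(1) wxy False] by simp_all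
      moreover have "nat \<lfloor>t\<rfloor> \<le> contraction_len x" "nat \<lfloor>s\<rfloor> \<le> contraction_len y"
        using x(3) y(3) by linarith+
      ultimately have "homotopy u \<in> V" "homotopy v \<in> V" unfolding V_def homotopy_def using uv by auto
      then show ?thesis using B by fastforce
    qed
  qed simp
qed

lemma metric_proper_homotopy:
  "metric_proper (cyl homotopy_len A) (prod_dist (word_dist G S) real_dist) (carrier G) (word_dist G S) homotopy"
  unfolding metric_proper_def
proof (intro allI impI)
  fix K assume K: "K \<subseteq> carrier G" "bounded_in (word_dist G S) K"
  obtain m where m: "K \<subseteq> wball m" using bounded_subset_wball[OF K] by blast
  define Hits where "Hits = {x\<in>A. link_start (ctr x) \<le> m \<or> (\<exists>i. wlen (link (ctr x) i) \<le> m)} \<union>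
    {x\<in>A. \<exists>n. wlen (C (ctr x) x n) \<le> m}"
  have "finite Hits" unfolding Hits_def using finite_link_hits_ctr finite_comb_hits by simp
  then obtain Bx Bq where Bx: "\<forall>x\<in>Hits. \<forall>y\<in>Hits. word_dist G S x y \<le> Bx"
    and Bq: "\<forall>x\<in>Hits. \<forall>y\<in>Hits. homotopy_len x \<le> Bq"
    using finite_bounded_in[of Hits "word_dist G S"] finite_bounded_in[of Hits "\<lambda>x y. homotopy_len x"]
    unfolding bounded_in_def by blast
  have mem: "fst u \<in> Hits \<and> 0 \<le> snd u \<and> snd u \<le> Bq" if "u \<in> {u \<in> cyl homotopy_len A. homotopy u \<in> K}" for u
  proof -
    have u: "fst u \<in> A" "0 \<le> snd u" "snd u \<le> homotopy_len (fst u)" using that by (auto simp: cyl_homotopy_len_iff)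
    have "wlen (contraction (fst u) (nat \<lfloor>snd u\<rfloor>)) \<le> m" using that m by (auto simp: homotopy_def wball_def)
    then have "fst u \<in> Hits" using contraction_hits[OF u(1)] u(1) unfolding Hits_def by blast
    then show ?thesis using u Bq by fastforce
  qed
  show "bounded_in (prod_dist (word_dist G S) real_dist) {u \<in> cyl homotopy_len A. homotopy u \<in> K}"
    unfolding bounded_in_def
  proof (intro exI[of _ "max Bx Bq"] ballI)
    fix u v assume "u \<in> {u \<in> cyl homotopy_len A. homotopy u \<in> K}" "v \<in> {u \<in> cyl homotopy_len A. homotopy u \<in> K}"
    then have "fst u \<in> Hits" "0 \<le> snd u" "snd u \<le> Bq" "fst v \<in> Hits" "0 \<le> snd v" "snd v \<le> Bq"
      using mem by blast+
    then show "prod_dist (word_dist G S) real_dist u v \<le> max Bx Bq"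
      using Bx unfolding prod_dist_def real_dist_def by (simp add: max.coboundedI1 max.coboundedI2 abs_le_iff)
  qed
qed

theorem coarsely_categorical: "coarsely_categorical (carrier G) (word_dist G S) A"
proof -
  have ends: "\<forall>x\<in>A. homotopy (x, 0) = (ray_map \<circ> ray_param) x \<and> homotopy (x, homotopy_len x) = id x"
    using contraction_0 contraction_len by (simp add: homotopy_def ray_map_def ray_param_def homotopy_len_def)
  have "coarse_map (cyl homotopy_len A) (prod_dist (word_dist G S) real_dist) (carrier G) (word_dist G S) homotopy"
    using controlled_homotopy metric_proper_homotopy contraction_in_carrier
    by (auto simp: coarse_map_def homotopy_def cyl_homotopy_len_iff)
  then have "coarsely_homotopic A (word_dist G S) (carrier G) (word_dist G S) (ray_map \<circ> ray_param) id"
    unfolding coarsely_homotopic_def using coarse_homotopy_len ends by blast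
  then show ?thesis
    unfolding coarsely_categorical_def using coarse_ray_map coarse_ray_param by blast
qed

end

section \<open>Covers of growing scale on annuli\<close>

locale asdim_bicombed_group = one_ended_word_group G S + bicombed_word_group G S C
  for G :: "('g, 'b) monoid_scheme" (structure) and S C +
  fixes n :: nat
  assumes asdim_le_n: "asdim_le (carrier G) (word_dist G S) n"
begin

definition separated_cover :: "real \<Rightarrow> (nat \<Rightarrow> 'g set set) \<Rightarrow> bool" where
  "separated_cover r \<U> \<longleftrightarrow> (\<forall>i\<le>n. (\<forall>U\<in>\<U> i. U \<subseteq> carrier G) \<and>
       (\<exists>D. \<forall>U\<in>\<U> i. \<forall>x\<in>U. \<forall>y\<in>U. word_dist G S x y \<le> D) \<and>
       (\<forall>U\<in>\<U> i. \<forall>V\<in>\<U> i. U \<noteq> V \<longrightarrow> (\<forall>x\<in>U. \<forall>y\<in>V. r < word_dist G S x y))) \<and>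
     carrier G \<subseteq> \<Union>(\<Union>i\<le>n. \<U> i)"

definition cover :: "real \<Rightarrow> nat \<Rightarrow> 'g set set" where "cover r = (SOME \<U>. separated_cover r \<U>)"

lemma separated_cover_cover: "separated_cover r (cover r)"
proof -
  have "\<exists>\<U>. separated_cover r \<U>" using asdim_le_n unfolding asdim_le_def separated_cover_def by blast
  then show ?thesis unfolding cover_def by (rule someI_ex)
qed

lemma cover_color:
  assumes "i \<le> n"
  shows "\<forall>U\<in>cover r i. U \<subseteq> carrier G"
    and "\<exists>D. \<forall>U\<in>cover r i. \<forall>x\<in>U. \<forall>y\<in>U. word_dist G S x y \<le> D"
    and "\<forall>U\<in>cover r i. \<forall>V\<in>cover r i. U \<noteq> V \<longrightarrow> (\<forall>x\<in>U. \<forall>y\<in>V. r < word_dist G S x y)"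
proof -
  have "\<forall>i\<le>n. (\<forall>U\<in>cover r i. U \<subseteq> carrier G) \<and>
      (\<exists>D. \<forall>U\<in>cover r i. \<forall>x\<in>U. \<forall>y\<in>U. word_dist G S x y \<le> D) \<and>
      (\<forall>U\<in>cover r i. \<forall>V\<in>cover r i. U \<noteq> V \<longrightarrow> (\<forall>x\<in>U. \<forall>y\<in>V. r < word_dist G S x y))"
    using separated_cover_cover[of r] unfolding separated_cover_def by (rule conjunct1)
  then have "(\<forall>U\<in>cover r i. U \<subseteq> carrier G) \<and>
      (\<exists>D. \<forall>U\<in>cover r i. \<forall>x\<in>U. \<forall>y\<in>U. word_dist G S x y \<le> D) \<and>
      (\<forall>U\<in>cover r i. \<forall>V\<in>cover r i. U \<noteq> V \<longrightarrow> (\<forall>x\<in>U. \<forall>y\<in>V. r < word_dist G S x y))"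
    using assms by (elim allE impE)
  then show "\<forall>U\<in>cover r i. U \<subseteq> carrier G"
    and "\<exists>D. \<forall>U\<in>cover r i. \<forall>x\<in>U. \<forall>y\<in>U. word_dist G S x y \<le> D"
    and "\<forall>U\<in>cover r i. \<forall>V\<in>cover r i. U \<noteq> V \<longrightarrow> (\<forall>x\<in>U. \<forall>y\<in>V. r < word_dist G S x y)"
    by simp_all
qed

lemma cover_subset: "i \<le> n \<Longrightarrow> U \<in> cover r i \<Longrightarrow> U \<subseteq> carrier G"
  using cover_color(1) by blast

lemma cover_sep:
  "\<lbrakk>i \<le> n; U \<in> cover r i; V \<in> cover r i; U \<noteq> V; x \<in> U; y \<in> V\<rbrakk> \<Longrightarrow> r < real (wdist x y)"
  using cover_color(3) unfolding word_dist_eq_wdist by blast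

lemma cover_covers: "x \<in> carrier G \<Longrightarrow> \<exists>i\<le>n. \<exists>U\<in>cover r i. x \<in> U"
proof -
  assume x: "x \<in> carrier G"
  have "carrier G \<subseteq> \<Union>(\<Union>i\<le>n. cover r i)"
    using separated_cover_cover[of r] unfolding separated_cover_def by (rule conjunct2)
  then show ?thesis using x by blast
qed

lemma cover_bounded: "\<exists>D::nat. \<forall>i\<le>n. \<forall>U\<in>cover r i. \<forall>x\<in>U. \<forall>y\<in>U. wdist x y \<le> D"
proof -
  have "\<forall>i. \<exists>D. i \<le> n \<longrightarrow> (\<forall>U\<in>cover r i. \<forall>x\<in>U. \<forall>y\<in>U. word_dist G S x y \<le> D)"
    using cover_color(2) by blast
  then obtain D where D: "\<And>i. i \<le> n \<Longrightarrow> \<forall>U\<in>cover r i. \<forall>x\<in>U. \<forall>y\<in>U. word_dist G S x y \<le> D i"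
    by metis
  let ?T = "\<Sum>i\<le>n. \<bar>D i\<bar>"
  show ?thesis
  proof (intro exI[of _ "nat \<lceil>?T\<rceil>"] allI impI ballI)
    fix i U x y assume i: "i \<le> n" and U: "U \<in> cover r i" and xy: "x \<in> U" "y \<in> U"
    have "\<bar>D i\<bar> \<le> ?T" using i by (intro member_le_sum[of i "{..n}" "\<lambda>i. \<bar>D i\<bar>"]) auto
    moreover have "real (wdist x y) \<le> D i" using D[OF i] U xy by (simp add: word_dist_eq_wdist)
    ultimately show "wdist x y \<le> nat \<lceil>?T\<rceil>" by linarith
  qed
qed

definition cover_diam :: "real \<Rightarrow> nat" where
  "cover_diam r = (SOME D. \<forall>i\<le>n. \<forall>U\<in>cover r i. \<forall>x\<in>U. \<forall>y\<in>U. wdist x y \<le> D)"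

lemma wdist_le_cover_diam: "\<lbrakk>i \<le> n; U \<in> cover r i; x \<in> U; y \<in> U\<rbrakk> \<Longrightarrow> wdist x y \<le> cover_diam r"
  using someI_ex[OF cover_bounded[of r]] unfolding cover_diam_def by blast

text \<open>Chosen so that two pieces of scale \<open>cover_scale (Suc k)\<close> that are \<open>cover_scale k\<close>-close
  to a common piece of scale \<open>cover_scale k\<close> coincide.\<close>
fun cover_scale :: "nat \<Rightarrow> nat" where
  "cover_scale 0 = 1"
| "cover_scale (Suc k) = 2 * cover_scale k + cover_diam (real (cover_scale k)) + 1"

abbreviation cover_at :: "nat \<Rightarrow> nat \<Rightarrow> 'g set set" where "cover_at k \<equiv> cover (real (cover_scale k))"

abbreviation diam_at :: "nat \<Rightarrow> nat" where "diam_at k \<equiv> cover_diam (real (cover_scale k))"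

lemma less_cover_scale: "k < cover_scale k"
  by (induction k) auto

lemma cover_scale_mono: "k \<le> k' \<Longrightarrow> cover_scale k \<le> cover_scale k'"
  by (induction k' rule: dec_induct) (auto intro: le_trans)

definition ctr_dist_bound :: "nat \<Rightarrow> nat" where "ctr_dist_bound k = diam_at k + cover_scale k + diam_at (Suc k)"

text \<open>Wide enough that combing lines from the centers of points of annulus \<open>Suc j\<close> avoid the
  ball of radius \<open>Suc j\<close>, and that attachments do not chain.\<close>
definition annulus_width :: "nat \<Rightarrow> nat" where
  "annulus_width j = j + 1 + ctr_dist_bound (Suc j) + comb_bound (ctr_dist_bound (Suc j)) + diam_at j +
     2 * cover_scale j + 1"

definition annulus_start :: "nat \<Rightarrow> nat" where "annulus_start k = (\<Sum>j<k. annulus_width j)"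

lemma strict_mono_annulus_start: "strict_mono annulus_start"
  unfolding annulus_start_def by (rule strict_mono_partial_sums) (simp add: annulus_width_def)

lemma annulus_start_0[simp]: "annulus_start 0 = 0"
  by (simp add: annulus_start_def)

lemma annulus_start_Suc: "annulus_start (Suc k) = annulus_start k + annulus_width k"
  by (simp add: annulus_start_def)

definition annulus :: "'g \<Rightarrow> nat" where "annulus x = interval_index annulus_start (wlen x)"

lemma annulus_lower: "annulus_start (annulus x) \<le> wlen x"
  unfolding annulus_def by (rule interval_index_lower[OF strict_mono_annulus_start annulus_start_0])

lemma annulus_upper: "wlen x < annulus_start (Suc (annulus x))"
  unfolding annulus_def by (rule interval_index_upper[OF strict_mono_annulus_start annulus_start_0])

lemma annulus_ge: "annulus_start k \<le> wlen x \<Longrightarrow> k \<le> annulus x"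
  unfolding annulus_def by (rule interval_index_ge[OF strict_mono_annulus_start annulus_start_0])

lemma annulus_less: "wlen x < annulus_start k \<Longrightarrow> annulus x < k"
  unfolding annulus_def by (rule interval_index_less[OF strict_mono_annulus_start annulus_start_0])

lemma finite_annulus_le: "finite {x \<in> carrier G. annulus x \<le> m}"
proof -
  have "{x \<in> carrier G. annulus x \<le> m} \<subseteq> wball (annulus_start (Suc m))"
  proof
    fix x assume x: "x \<in> {x \<in> carrier G. annulus x \<le> m}"
    then have "annulus_start (Suc (annulus x)) \<le> annulus_start (Suc m)"
      using strict_mono_less_eq[OF strict_mono_annulus_start] by simp
    then show "x \<in> wball (annulus_start (Suc m))" using annulus_upper[of x] x by (simp add: wball_def)
  qed
  then show ?thesis using finite_wball finite_subset by blast
qed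

end

lemma (in asdim_bicombed_group) annulus_of_close_point:
  assumes x: "x \<in> carrier G" and y: "y \<in> carrier G" and k: "annulus x = Suc j"
    and d: "wdist x y \<le> cover_scale j"
  shows "j \<le> annulus y" "annulus y \<le> Suc (Suc j)"
proof -
  have "annulus_start (Suc j) \<le> wlen x" using annulus_lower[of x] k by simp
  moreover have "wlen x \<le> wlen y + wdist x y" using wlen_triangle'[OF x y] .
  moreover have "annulus_start (Suc j) = annulus_start j + annulus_width j" by (rule annulus_start_Suc)
  moreover have "cover_scale j \<le> annulus_width j" by (simp add: annulus_width_def)
  ultimately have "annulus_start j \<le> wlen y" using d by linarith
  then show "j \<le> annulus y" by (rule annulus_ge)
  have "wlen x < annulus_start (Suc (Suc j))" using annulus_upper[of x] k by simp
  moreover have "wlen y \<le> wlen x + wdist x y" using wlen_triangle[OF x y] .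
  moreover have "annulus_start (Suc (Suc (Suc j))) = annulus_start (Suc (Suc j)) + annulus_width (Suc (Suc j))"
    by (rule annulus_start_Suc)
  moreover have "cover_scale j \<le> annulus_width (Suc (Suc j))"
    using cover_scale_mono[of j "Suc (Suc j)"] by (simp add: annulus_width_def)
  ultimately have "wlen y < annulus_start (Suc (Suc (Suc j)))" using d by linarith
  then show "annulus y \<le> Suc (Suc j)" using annulus_less by fastforce
qed

section \<open>Color classes are coarsely categorical\<close>

locale color_class = asdim_bicombed_group G S C n for G :: "('g, 'b) monoid_scheme" (structure) and S C n +
  fixes i :: nat
  assumes color_le: "i \<le> n"
begin

definition color_set :: "'g set" where
  "color_set = {x \<in> carrier G. \<exists>U. U \<in> cover_at (annulus x) i \<and> x \<in> U}"

definition piece :: "'g \<Rightarrow> 'g set" where "piece x = (THE U. U \<in> cover_at (annulus x) i \<and> x \<in> U)"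

definition attached :: "nat \<Rightarrow> 'g set \<Rightarrow> 'g set \<Rightarrow> bool" where
  "attached k U U' \<longleftrightarrow> U' \<in> cover_at (Suc k) i \<and>
     (\<exists>y z. y \<in> color_set \<and> annulus y = k \<and> y \<in> U \<and> z \<in> color_set \<and> annulus z = Suc k \<and> z \<in> U' \<and>
        wdist y z < cover_scale k)"

definition representative :: "nat \<Rightarrow> 'g set \<Rightarrow> 'g" where
  "representative k U = (SOME y. y \<in> color_set \<and> annulus y = k \<and> y \<in> U)"

definition center :: "'g \<Rightarrow> 'g" where
  "center x = (if \<exists>V. attached (annulus x) (piece x) V
     then representative (Suc (annulus x)) (THE V. attached (annulus x) (piece x) V)
     else representative (annulus x) (piece x))"

lemma color_set_carrier: "x \<in> color_set \<Longrightarrow> x \<in> carrier G"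
  by (simp add: color_set_def)

lemma cover_at_diam: "U \<in> cover_at k i \<Longrightarrow> u \<in> U \<Longrightarrow> v \<in> U \<Longrightarrow> wdist u v \<le> diam_at k"
  using wdist_le_cover_diam[OF color_le] by blast

lemma cover_at_sep:
  "\<lbrakk>U \<in> cover_at k i; V \<in> cover_at k i; U \<noteq> V; u \<in> U; v \<in> V\<rbrakk> \<Longrightarrow> cover_scale k < wdist u v"
  using cover_sep[OF color_le, of U "real (cover_scale k)" V u v] by simp

lemma cover_at_carrier: "U \<in> cover_at k i \<Longrightarrow> u \<in> U \<Longrightarrow> u \<in> carrier G"
  using cover_subset[OF color_le] by blast

lemma piece_eq: assumes "U \<in> cover_at (annulus x) i" "x \<in> U" shows "piece x = U"
  unfolding piece_def
proof (rule the_equality)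
  fix V assume V: "V \<in> cover_at (annulus x) i \<and> x \<in> V"
  show "V = U"
  proof (rule ccontr)
    assume "V \<noteq> U"
    then have "cover_scale (annulus x) < wdist x x" using cover_at_sep[of V "annulus x" U x x] V assms by simp
    then show False using cover_at_carrier[OF assms] by simp
  qed
qed (use assms in simp)

lemma piece_in_cover_at: "x \<in> color_set \<Longrightarrow> piece x \<in> cover_at (annulus x) i"
  and mem_piece: "x \<in> color_set \<Longrightarrow> x \<in> piece x"
proof -
  assume "x \<in> color_set"
  then obtain U where U: "U \<in> cover_at (annulus x) i" "x \<in> U" unfolding color_set_def by blast
  then show "piece x \<in> cover_at (annulus x) i" "x \<in> piece x" using piece_eq[OF U] by simp_all
qed

lemma representative_spec:
  assumes "y \<in> color_set" "annulus y = k" "y \<in> U"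
  shows "representative k U \<in> color_set" "annulus (representative k U) = k" "representative k U \<in> U"
proof -
  have "\<exists>y. y \<in> color_set \<and> annulus y = k \<and> y \<in> U" using assms by blast
  from someI_ex[OF this] show "representative k U \<in> color_set" "annulus (representative k U) = k"
    "representative k U \<in> U"
    unfolding representative_def by blast+
qed

lemma attached_intro:
  assumes "u \<in> color_set" "v \<in> color_set" "annulus u = k" "annulus v = Suc k" "wdist u v < cover_scale k"
  shows "attached k (piece u) (piece v)"
proof -
  have "piece v \<in> cover_at (Suc k) i" using piece_in_cover_at[OF assms(2)] assms(4) by simp
  moreover have "u \<in> color_set \<and> annulus u = k \<and> u \<in> piece u \<and> v \<in> color_set \<and> annulus v = Suc k \<and>
      v \<in> piece v \<and> wdist u v < cover_scale k"
    using assms mem_piece by simp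
  ultimately show ?thesis unfolding attached_def by blast
qed

lemma attached_unique:
  assumes U: "U \<in> cover_at k i" and a1: "attached k U U1" and a2: "attached k U U2"
  shows "U1 = U2"
proof (rule ccontr)
  assume ne: "U1 \<noteq> U2"
  obtain y1 z1 where w1: "y1 \<in> color_set" "y1 \<in> U" "z1 \<in> color_set" "z1 \<in> U1"
    "wdist y1 z1 < cover_scale k" "U1 \<in> cover_at (Suc k) i"
    using a1 unfolding attached_def by blast
  obtain y2 z2 where w2: "y2 \<in> color_set" "y2 \<in> U" "z2 \<in> color_set" "z2 \<in> U2"
    "wdist y2 z2 < cover_scale k" "U2 \<in> cover_at (Suc k) i"
    using a2 unfolding attached_def by blast
  have M: "y1 \<in> carrier G" "z1 \<in> carrier G" "y2 \<in> carrier G" "z2 \<in> carrier G"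
    using w1 w2 color_set_carrier by auto
  have "wdist z1 z2 \<le> wdist z1 y1 + wdist y1 y2 + wdist y2 z2" using wdist_triangle3[OF M(2,1,3,4)] .
  moreover have "wdist z1 y1 = wdist y1 z1" using wdist_sym M by metis
  moreover have "wdist y1 y2 \<le> diam_at k" using cover_at_diam[OF U w1(2) w2(2)] .
  ultimately have "wdist z1 z2 < cover_scale (Suc k)" using w1(5) w2(5) by simp
  moreover have "cover_scale (Suc k) < wdist z1 z2" using cover_at_sep[OF w1(6) w2(6) ne w1(4) w2(4)] .
  ultimately show False by simp
qed

lemma center_if_attached:
  assumes x: "x \<in> color_set" and a: "attached (annulus x) (piece x) V"
  shows "center x = representative (Suc (annulus x)) V"
proof -
  have ex: "\<exists>V. attached (annulus x) (piece x) V" using a by blast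
  have "(THE V. attached (annulus x) (piece x) V) = V"
    using attached_unique[OF piece_in_cover_at[OF x] _ a] a by (intro the_equality)
  then show ?thesis unfolding center_def using ex by (simp only: if_True)
qed

lemma center_if_not_attached:
  "\<not> (\<exists>V. attached (annulus x) (piece x) V) \<Longrightarrow> center x = representative (annulus x) (piece x)"
  by (simp add: center_def)

lemma center_spec: assumes x: "x \<in> color_set"
  shows "center x \<in> carrier G" "wdist x (center x) \<le> ctr_dist_bound (annulus x)"
proof -
  let ?k = "annulus x"
  have xM: "x \<in> carrier G" using x color_set_carrier by simp
  have "center x \<in> carrier G \<and> wdist x (center x) \<le> ctr_dist_bound ?k"
  proof (cases "\<exists>V. attached ?k (piece x) V")
    case True
    then obtain V where V: "attached ?k (piece x) V" by blast
    obtain y z where w: "y \<in> color_set" "y \<in> piece x" "z \<in> color_set" "annulus z = Suc ?k" "z \<in> V"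
      "wdist y z < cover_scale ?k" "V \<in> cover_at (Suc ?k) i"
      using V unfolding attached_def by blast
    let ?r = "representative (Suc ?k) V"
    have p: "?r \<in> color_set" "?r \<in> V" using representative_spec[OF w(3,4,5)] by simp_all
    have M: "y \<in> carrier G" "z \<in> carrier G" "?r \<in> carrier G" using w p color_set_carrier by auto
    have "wdist x ?r \<le> wdist x y + wdist y z + wdist z ?r" using wdist_triangle3[OF xM M] .
    moreover have "wdist x y \<le> diam_at ?k" using cover_at_diam[OF piece_in_cover_at[OF x] mem_piece[OF x] w(2)] .
    moreover have "wdist z ?r \<le> diam_at (Suc ?k)" using cover_at_diam[OF w(7) w(5) p(2)] .
    ultimately show ?thesis using center_if_attached[OF x V] M w(6) by (simp add: ctr_dist_bound_def)
  next
    case False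
    let ?r = "representative ?k (piece x)"
    have p: "?r \<in> color_set" "?r \<in> piece x" using representative_spec[OF x refl mem_piece[OF x]] by simp_all
    have "wdist x ?r \<le> diam_at ?k" using cover_at_diam[OF piece_in_cover_at[OF x] mem_piece[OF x] p(2)] .
    then show ?thesis using center_if_not_attached[OF False] p color_set_carrier
      by (simp add: ctr_dist_bound_def)
  qed
  then show "center x \<in> carrier G" "wdist x (center x) \<le> ctr_dist_bound (annulus x)" by simp_all
qed

text \<open>A piece attached from annulus \<open>k\<close> lies too close to the inner boundary of annulus
  \<open>Suc k\<close> to reach annulus \<open>Suc (Suc k)\<close>.\<close>
lemma attached_no_chain:
  assumes a: "attached k U U'" and z: "z \<in> color_set" "annulus z = Suc k" "z \<in> U'"
  shows "\<not> (\<exists>U''. attached (Suc k) (piece z) U'')"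
proof
  assume "\<exists>U''. attached (Suc k) (piece z) U''"
  then obtain U'' where a2: "attached (Suc k) (piece z) U''" by blast
  obtain y z' where w: "y \<in> color_set" "annulus y = k" "z' \<in> color_set" "z' \<in> U'"
    "wdist y z' < cover_scale k" "U' \<in> cover_at (Suc k) i"
    using a unfolding attached_def by blast
  obtain y' w' where w2: "y' \<in> color_set" "y' \<in> piece z" "w' \<in> color_set"
    "annulus w' = Suc (Suc k)" "wdist y' w' < cover_scale (Suc k)"
    using a2 unfolding attached_def by blast
  have pz: "piece z = U'" using piece_eq[of U' z] w(6) z by simp
  have M: "y \<in> carrier G" "z' \<in> carrier G" "y' \<in> carrier G" "w' \<in> carrier G"
    using w w2 color_set_carrier by auto
  have "wlen y < annulus_start (Suc k)" using annulus_upper[of y] w(2) by simp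
  moreover have "wlen z' \<le> wlen y + wdist y z'" using wlen_triangle[OF M(1,2)] .
  moreover have "wlen y' \<le> wlen z' + wdist z' y'" using wlen_triangle[OF M(2,3)] .
  moreover have "wdist z' y' \<le> diam_at (Suc k)" using cover_at_diam[OF w(6) w(4)] w2(2) pz by simp
  moreover have "wlen w' \<le> wlen y' + wdist y' w'" using wlen_triangle[OF M(3,4)] .
  moreover have "annulus_start (Suc (Suc k)) \<le> wlen w'" using annulus_lower[of w'] w2(4) by simp
  moreover have "annulus_start (Suc (Suc k)) = annulus_start (Suc k) + annulus_width (Suc k)"
    by (rule annulus_start_Suc)
  moreover have "diam_at (Suc k) + 2 * cover_scale (Suc k) + cover_scale k \<le> annulus_width (Suc k) + cover_scale (Suc k)"
    using cover_scale_mono[of k "Suc k"] by (simp add: annulus_width_def)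
  ultimately show False using w(5) w2(5) by linarith
qed

lemma annulus_le_comb_wlen: assumes x: "x \<in> color_set" shows "annulus x \<le> wlen (C (center x) x m)"
proof (cases "annulus x")
  case (Suc j)
  let ?k = "annulus x" and ?c = "center x"
  have xM: "x \<in> carrier G" using x color_set_carrier by simp
  have cM: "?c \<in> carrier G" and dc: "wdist x ?c \<le> ctr_dist_bound ?k" using center_spec[OF x] by simp_all
  have dc': "wdist ?c x \<le> ctr_dist_bound ?k" using dc wdist_sym xM cM by metis
  have CM: "C ?c x m \<in> carrier G" using comb_in_carrier cM xM by simp
  have b: "wdist ?c (C ?c x m) \<le> comb_bound (ctr_dist_bound ?k)" using wdist_comb_start_le[OF cM xM dc'] .
  have "annulus_start ?k \<le> wlen x" by (rule annulus_lower)
  moreover have "annulus_start ?k = annulus_start j + annulus_width j" using Suc annulus_start_Suc by simp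
  moreover have "annulus_width j \<ge> ?k + ctr_dist_bound ?k + comb_bound (ctr_dist_bound ?k)"
    using Suc by (simp add: annulus_width_def)
  moreover have "wlen x \<le> wlen ?c + wdist ?c x" using wlen_triangle[OF cM xM] .
  moreover have "wlen ?c \<le> wlen (C ?c x m) + wdist ?c (C ?c x m)" using wlen_triangle'[OF cM CM] .
  ultimately show ?thesis using dc' b by linarith
qed simp

lemma center_eq_if_close:
  assumes x: "x \<in> color_set" and y: "y \<in> color_set" and r: "r < annulus x" and d: "wdist x y < r"
  shows "center x = center y"
proof -
  let ?k = "annulus x"
  obtain j where kj: "?k = Suc j" using r by (cases "annulus x") auto
  have xM: "x \<in> carrier G" and yM: "y \<in> carrier G" using x y color_set_carrier by auto
  have rj: "r \<le> cover_scale j" using less_cover_scale[of j] r kj by simp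
  have rk: "cover_scale j \<le> cover_scale ?k" using cover_scale_mono[of j ?k] kj by simp
  have dyx: "wdist y x = wdist x y" using wdist_sym xM yM by metis
  have "j \<le> annulus y" "annulus y \<le> Suc (Suc j)"
    using annulus_of_close_point[OF xM yM kj] d rj by simp_all
  then consider "annulus y = ?k" | "annulus y = Suc ?k" | "annulus y = j" using kj by linarith
  then show ?thesis
  proof cases
    case 1
    have "piece x = piece y"
    proof (rule ccontr)
      assume "piece x \<noteq> piece y"
      then have "cover_scale ?k < wdist x y"
        using cover_at_sep piece_in_cover_at[OF x] piece_in_cover_at[OF y] mem_piece x y 1 by metis
      then show False using d rj rk by linarith
    qed
    then show ?thesis using 1 by (simp add: center_def)
  next
    case 2
    have a: "attached ?k (piece x) (piece y)" using attached_intro[OF x y refl 2] d rj rk by linarith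
    have "center y = representative (Suc ?k) (piece y)"
      using center_if_not_attached attached_no_chain[OF a y 2 mem_piece[OF y]] 2 by simp
    then show ?thesis using center_if_attached[OF x a] by simp
  next
    case 3
    have a: "attached j (piece y) (piece x)" using attached_intro[OF y x 3 kj] d dyx rj by linarith
    have "center x = representative ?k (piece x)"
      using center_if_not_attached attached_no_chain[OF a x kj mem_piece[OF x]] kj by simp
    moreover have "center y = representative (Suc j) (piece x)"
      using center_if_attached[of y "piece x"] y a 3 by simp
    ultimately show ?thesis using kj by simp
  qed
qed

lemma coarsely_categorical_color_set: "coarsely_categorical (carrier G) (word_dist G S) color_set"
proof -
  interpret centered_set G S C color_set center
  proof
    show "color_set \<subseteq> carrier G" using color_set_carrier by blast
    show "\<And>x. x \<in> color_set \<Longrightarrow> center x \<in> carrier G" using center_spec by simp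
  next
    fix m
    have "{x \<in> color_set. \<exists>k. wlen (C (center x) x k) \<le> m} \<subseteq> {x \<in> carrier G. annulus x \<le> m}"
    proof
      fix x assume "x \<in> {x \<in> color_set. \<exists>k. wlen (C (center x) x k) \<le> m}"
      then obtain k where x: "x \<in> color_set" "wlen (C (center x) x k) \<le> m" by blast
      then show "x \<in> {x \<in> carrier G. annulus x \<le> m}"
        using annulus_le_comb_wlen[OF x(1), of k] color_set_carrier by simp
    qed
    then show "finite {x \<in> color_set. \<exists>k. wlen (C (center x) x k) \<le> m}"
      using finite_annulus_le finite_subset by blast
  next
    fix r
    have "{x \<in> color_set. \<exists>y\<in>color_set. wdist x y < r \<and> center x \<noteq> center y} \<subseteq>
        {x \<in> carrier G. annulus x \<le> r}"
    proof
      fix x assume "x \<in> {x \<in> color_set. \<exists>y\<in>color_set. wdist x y < r \<and> center x \<noteq> center y}"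
      then obtain y where x: "x \<in> color_set" and y: "y \<in> color_set" "wdist x y < r" "center x \<noteq> center y"
        by blast
      then have "\<not> r < annulus x" using center_eq_if_close by blast
      then show "x \<in> {x \<in> carrier G. annulus x \<le> r}" using x color_set_carrier by simp
    qed
    then show "finite {x \<in> color_set. \<exists>y\<in>color_set. wdist x y < r \<and> center x \<noteq> center y}"
      using finite_annulus_le finite_subset by blast
  qed
  show ?thesis by (rule coarsely_categorical)
qed

end

lemma (in asdim_bicombed_group) ccat_le_asdim_bound: "ccat_le (carrier G) (word_dist G S) n"
proof -
  let ?U = "color_class.color_set G S C n"
  have color_class: "color_class G S C n i" if "i \<le> n" for i
    using asdim_bicombed_group_axioms that by (simp add: color_class_def color_class_axioms_def)
  show ?thesis unfolding ccat_le_def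
  proof (intro exI[of _ ?U] conjI allI impI)
    fix i assume "i \<le> n"
    then interpret color_class G S C n i by (rule color_class)
    show "color_set \<subseteq> carrier G" using color_set_carrier by blast
    show "coarsely_categorical (carrier G) (word_dist G S) color_set"
      by (rule coarsely_categorical_color_set)
  next
    show "carrier G \<subseteq> (\<Union>i\<le>n. ?U i)"
    proof
      fix x assume x: "x \<in> carrier G"
      obtain i V where iV: "i \<le> n" "V \<in> cover (real (cover_scale (annulus x))) i" "x \<in> V"
        using cover_covers[OF x] by blast
      interpret color_class G S C n i by (rule color_class[OF iV(1)])
      have "x \<in> color_set" using x iV unfolding color_set_def by blast
      then show "x \<in> (\<Union>i\<le>n. ?U i)" using iV(1) by blast
    qed
  qed
qed

lemma ccat_le_asdim:
  assumes "\<And>n. asdim_le M d n \<Longrightarrow> ccat_le M d n"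
  shows "ccat M d \<le> asdim M d"
  unfolding ccat_def asdim_def
proof (rule INF_greatest)
  fix n assume "n \<in> {n. asdim_le M d n}"
  then show "(INF k\<in>{k. ccat_le M d k}. enat k) \<le> enat n" using assms by (intro INF_lower) simp
qed

theorem corollary5p12:
  fixes G :: "('g, 'b) monoid_scheme" and S :: "'g set"
  assumes "group G" and "finite S" and "S \<subseteq> carrier G" and "generate G S = carrier G"
    and "bicombable G S" and "one_ended G S" and "semistable_at_infinity G S"
  shows "ccat (carrier G) (word_dist G S) \<le> asdim (carrier G) (word_dist G S)"
proof (rule ccat_le_asdim)
  fix n assume asdim: "asdim_le (carrier G) (word_dist G S) n"
  obtain C where "bicombing (carrier G) (word_dist G S) C"
    using assms(5) unfolding bicombable_def by blast
  then have "asdim_bicombed_group G S C n"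
    using assms(1-4,6) asdim
    by (simp add: asdim_bicombed_group_def asdim_bicombed_group_axioms_def one_ended_word_group_def
        one_ended_word_group_axioms_def bicombed_word_group_def bicombed_word_group_axioms_def
        word_group_def word_group_axioms_def)
  then show "ccat_le (carrier G) (word_dist G S) n" by (rule asdim_bicombed_group.ccat_le_asdim_bound)
qed

end
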